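(* 1) Consider a strategy $\sigma=(\nu,\lambda)$ such that $\lambda_t^n>0$ for all $t\ge 0$ and $n=1,\dots,N$. Then $\sigma$ is survival if \[ \sum_{t=0}^\infty \|\lambda_t-\mu_t\|^2<\infty \quad \text{a.s.} \] Moreover, for a strategy $\sigma$ such that $\lambda_t^n>0$ and $\nu_t$ is bounded away from zero, this condition is also necessary for survival. 2) Suppose that in a strategy profile, some agent uses a survival strategy $\sigma=(\nu,\lambda)$ such that its components $\lambda_t^n$ and $\nu_t$ are bounded away from zero. Then \[ \sum_{t=0}^\infty \|\bar\lambda_t-\mu_t\|^2<\infty \quad \text{a.s.} \]
   Context: A probability space carries a discrete-time filtration $(\mathcal{F}_t)_{t\ge0}$ and an adapted sequence of random vectors $X_t=(X_t^1,\dots,X_t^N)$, $t\ge1$, with values in the simplex $\Delta^N=\{x\in\mathbb{R}_+^N: x^1+\dots+x^N=1\}$. There is a constant $\epsilon>0$ such that $\mathrm{E}(X_{t+1}^n\mid\mathcal{F}_t)\ge\epsilon$ for all $t\ge0$, $n=1,\dots,N$. Let $\mu_t^n=\mathrm{E}(X_{t+1}^n\mid\mathcal{F}_t)$ and $\mu_t=(\mu_t^1,\dots,\mu_t^N)$. $M$ agents have strictly positive non-random initial wealth $W_0^m$ (normalized so the total wealth is $1$). A strategy of an agent is a pair $\sigma=(\nu,\lambda)$ where $\nu_t\in[0,1]$ and $\lambda_t\in\Delta^N$ are $\mathcal{F}_t$-measurable ($\nu_t$ is the fraction of wealth bet at time $t$, $\lambda_t^n$ the fraction of the bet placed on the $n$-th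 component of $X_{t+1}$). Wealth evolves by \[ W_{t+1}^m=\sum_{k=1}^M \nu_t^kW_t^k\cdot\sum_{n=1}^N\frac{\nu_t^m\lambda_t^{mn}W_t^m}{\sum_{k=1}^M\nu_t^k\lambda_t^{kn}W_t^k}X_{t+1}^n+(1-\nu_t^m)W_t^m, \] and it is assumed throughout that in every strategy profile some agent has $\nu_t^m>0$ and $\lambda_t^{mn}>0$ for all $t,n$, so the denominators are positive and total wealth stays equal to $1$. The market forecast (wealth-weighted strategy) is $\bar\nu_t=\sum_m\nu_t^mW_t^m$, $\bar\lambda_t^n=\frac{1}{\bar\nu_t}\sum_m\nu_t^m\lambda_t^{mn}W_t^m$. A strategy is called survival if for any strategy profile containing it (used by agent $m$) and any initial wealth vector, $\liminf_{t\to\infty}W_t^m>0$ a.s. $\|\cdot\|$ denotes the Euclidean norm (pathwise for random vectors). *)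

theory Defs
  imports "HOL-Probability.Probability"
begin

text \<open>Components are indexed by n < N (0-based), agents by m < Ma (0-based).\<close>

definition prob_simplex :: "nat \<Rightarrow> (nat \<Rightarrow> real) set" where
  "prob_simplex N = {x. (\<forall>n<N. 0 \<le> x n) \<and> (\<Sum>n<N. x n) = 1}"

definition filtration_on :: "'w measure \<Rightarrow> (nat \<Rightarrow> 'w measure) \<Rightarrow> bool" where
  "filtration_on M F \<longleftrightarrow> (\<forall>t. subalgebra M (F t)) \<and> (\<forall>s t. s \<le> t \<longrightarrow> sets (F s) \<subseteq> sets (F t))"

definition mu :: "'w measure \<Rightarrow> (nat \<Rightarrow> 'w measure) \<Rightarrow> (nat \<Rightarrow> 'w \<Rightarrow> nat \<Rightarrow> real)
    \<Rightarrow> nat \<Rightarrow> 'w \<Rightarrow> nat \<Rightarrow> real" where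
  "mu M F X t w n = real_cond_exp M (F t) (\<lambda>v. X (Suc t) v n) w"

definition is_strategy :: "'w measure \<Rightarrow> (nat \<Rightarrow> 'w measure) \<Rightarrow> nat
    \<Rightarrow> (nat \<Rightarrow> 'w \<Rightarrow> real) \<Rightarrow> (nat \<Rightarrow> 'w \<Rightarrow> nat \<Rightarrow> real) \<Rightarrow> bool" where
  "is_strategy M F N nu lam \<longleftrightarrow>
     (\<forall>t. nu t \<in> borel_measurable (F t) \<and> (\<forall>n<N. (\<lambda>w. lam t w n) \<in> borel_measurable (F t))
        \<and> (\<forall>w\<in>space M. 0 \<le> nu t w \<and> nu t w \<le> 1 \<and> lam t w \<in> prob_simplex N))"

definition admissible_profile :: "'w measure \<Rightarrow> (nat \<Rightarrow> 'w measure) \<Rightarrow> nat \<Rightarrow> nat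
    \<Rightarrow> (nat \<Rightarrow> nat \<Rightarrow> 'w \<Rightarrow> real) \<Rightarrow> (nat \<Rightarrow> nat \<Rightarrow> 'w \<Rightarrow> nat \<Rightarrow> real) \<Rightarrow> bool" where
  "admissible_profile M F N Ma nus lams \<longleftrightarrow>
     (\<forall>m<Ma. is_strategy M F N (nus m) (lams m)) \<and>
     (\<exists>m<Ma. \<forall>t. \<forall>w\<in>space M. 0 < nus m t w \<and> (\<forall>n<N. 0 < lams m t w n))"

primrec wealth :: "nat \<Rightarrow> nat \<Rightarrow> (nat \<Rightarrow> 'w \<Rightarrow> nat \<Rightarrow> real)
    \<Rightarrow> (nat \<Rightarrow> nat \<Rightarrow> 'w \<Rightarrow> real) \<Rightarrow> (nat \<Rightarrow> nat \<Rightarrow> 'w \<Rightarrow> nat \<Rightarrow> real) \<Rightarrow> (nat \<Rightarrow> real)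
    \<Rightarrow> nat \<Rightarrow> 'w \<Rightarrow> nat \<Rightarrow> real" where
  "wealth N Ma X nus lams W0 0 w m = W0 m"
| "wealth N Ma X nus lams W0 (Suc t) w m =
     (\<Sum>k<Ma. nus k t w * wealth N Ma X nus lams W0 t w k) *
       (\<Sum>n<N. (nus m t w * lams m t w n * wealth N Ma X nus lams W0 t w m) /
               (\<Sum>k<Ma. nus k t w * lams k t w n * wealth N Ma X nus lams W0 t w k) * X (Suc t) w n)
     + (1 - nus m t w) * wealth N Ma X nus lams W0 t w m"

definition nu_bar :: "nat \<Rightarrow> nat \<Rightarrow> (nat \<Rightarrow> 'w \<Rightarrow> nat \<Rightarrow> real)
    \<Rightarrow> (nat \<Rightarrow> nat \<Rightarrow> 'w \<Rightarrow> real) \<Rightarrow> (nat \<Rightarrow> nat \<Rightarrow> 'w \<Rightarrow> nat \<Rightarrow> real) \<Rightarrow> (nat \<Rightarrow> real)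
    \<Rightarrow> nat \<Rightarrow> 'w \<Rightarrow> real" where
  "nu_bar N Ma X nus lams W0 t w = (\<Sum>m<Ma. nus m t w * wealth N Ma X nus lams W0 t w m)"

definition lam_bar :: "nat \<Rightarrow> nat \<Rightarrow> (nat \<Rightarrow> 'w \<Rightarrow> nat \<Rightarrow> real)
    \<Rightarrow> (nat \<Rightarrow> nat \<Rightarrow> 'w \<Rightarrow> real) \<Rightarrow> (nat \<Rightarrow> nat \<Rightarrow> 'w \<Rightarrow> nat \<Rightarrow> real) \<Rightarrow> (nat \<Rightarrow> real)
    \<Rightarrow> nat \<Rightarrow> 'w \<Rightarrow> nat \<Rightarrow> real" where
  "lam_bar N Ma X nus lams W0 t w n =
     (\<Sum>m<Ma. nus m t w * lams m t w n * wealth N Ma X nus lams W0 t w m) / nu_bar N Ma X nus lams W0 t w"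

definition survival :: "'w measure \<Rightarrow> (nat \<Rightarrow> 'w measure) \<Rightarrow> nat \<Rightarrow> (nat \<Rightarrow> 'w \<Rightarrow> nat \<Rightarrow> real)
    \<Rightarrow> (nat \<Rightarrow> 'w \<Rightarrow> real) \<Rightarrow> (nat \<Rightarrow> 'w \<Rightarrow> nat \<Rightarrow> real) \<Rightarrow> bool" where
  "survival M F N X nu lam \<longleftrightarrow>
     (\<forall>Ma m nus lams W0. m < Ma \<and> admissible_profile M F N Ma nus lams \<and>
        nus m = nu \<and> lams m = lam \<and> (\<forall>k<Ma. 0 < W0 k) \<and> (\<Sum>k<Ma. W0 k) = 1 \<longrightarrow>
        (AE w in M. 0 < liminf (\<lambda>t. ereal (wealth N Ma X nus lams W0 t w m))))"

end

theory Submission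
  imports Defs
begin

(*
  Write W for the wealth of the agent using (nu, lam) and lam_bar for the market forecast, so that
  W_{t+1} = W_t ((1 - nu_t) + nu_t <X_{t+1}, lam_t / lam_bar_t>); conditionally on F_t, the
  outcome X_{t+1} may be replaced by mu_t in such expressions.

  Sufficiency: by convexity of 1 / sqrt, W_t^(-1/2) divided by the product of the factors
  q_s = (1 - nu_s) + nu_s <mu_s, (lam_bar_s / lam_s)^(1/2)>, s < t, is a nonnegative
  supermartingale, hence almost surely bounded. By AM-GM, q_s - 1 is at most half the
  chi-square distance of mu_s from lam_s, which is summable together with |lam_t - mu_t|^2,
  so W_t stays away from zero. If nu and lam are bounded below by c, a sharper AM-GM gives
  q_s <= 1 + |mu_s - lam_s|^2 / c - c |lam_bar_s - mu_s|^2 / 16; as W_t <= 1 keeps the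
  products bounded below, the sum of |lam_bar_t - mu_t|^2 converges (part 2).

  Necessity: let the agent play against one who bets everything on mu. Then W_t divided by
  the product of r_s = (1 - nu_s) + nu_s <mu_s, lam_s / lam_bar_s> is a supermartingale, and
  since lam_bar_s is a mixture of lam_s and mu_s, 1 - r_s is at least
  nu_s^2 W_s W'_s |lam_s - mu_s|^2 with W' the opponent's wealth. If both agents survive,
  the products stay bounded below and the sum of |lam_t - mu_t|^2 converges.
*)

section \<open>Real inequalities and series\<close>

lemma prob_simplex_le_1:
  assumes "x \<in> prob_simplex N" "n < N"
  shows "x n \<le> 1"
proof -
  have "x n \<le> (\<Sum>i<N. x i)"
    by (rule member_le_sum) (use assms in \<open>auto simp: prob_simplex_def\<close>)
  then show ?thesis using assms by (simp add: prob_simplex_def)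
qed

lemma prob_simplex_weighted_sum_pos:
  fixes c :: "nat \<Rightarrow> real"
  assumes "x \<in> prob_simplex K" "\<And>n. n < K \<Longrightarrow> 0 < c n"
  shows "0 < (\<Sum>n<K. c n * x n)"
proof -
  have sum: "(\<Sum>n<K. x n) = 1" and x: "\<And>n. n < K \<Longrightarrow> 0 \<le> x n"
    using assms(1) by (auto simp: prob_simplex_def)
  have "\<exists>n<K. 0 < x n"
  proof (rule ccontr)
    assume "\<not> (\<exists>n<K. 0 < x n)"
    then have "\<forall>n<K. x n \<le> 0" using not_less by blast
    then have "(\<Sum>n<K. x n) \<le> 0" by (intro sum_nonpos) simp
    with sum show False by simp
  qed
  then obtain n where n: "n < K" "0 < x n" by blast
  have "0 < c n * x n" using n assms(2) by simp
  also have "\<dots> \<le> (\<Sum>n<K. c n * x n)"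
    by (rule member_le_sum) (use n assms(2) x in \<open>auto intro!: mult_nonneg_nonneg intro: less_imp_le\<close>)
  finally show ?thesis .
qed

lemma mix_with_one_pos:
  fixes v S :: real
  shows "0 \<le> v \<Longrightarrow> v \<le> 1 \<Longrightarrow> 0 < S \<Longrightarrow> 0 < (1 - v) + v * S"
  by (cases "v = 0") (auto intro: add_nonneg_pos)

lemma mix_with_one_le:
  fixes v S D :: real
  shows "0 \<le> v \<Longrightarrow> S \<le> 1 + D \<Longrightarrow> (1 - v) + v * S \<le> 1 + v * D"
  using mult_left_mono[of "S - 1" D v] by (simp add: algebra_simps)

lemma le_divide_of_le_one:
  fixes x b :: real
  shows "0 \<le> x \<Longrightarrow> 0 < b \<Longrightarrow> b \<le> 1 \<Longrightarrow> x \<le> x / b"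
  using divide_left_mono[of b 1 x] by simp

lemma inverse_sqrt_above_tangent:
  fixes y z :: real
  assumes "0 < y" "0 < z"
  shows "1 / sqrt y - (z - y) / (2 * sqrt y ^ 3) \<le> 1 / sqrt z"
proof -
  define s t where "s = sqrt y" and "t = sqrt z"
  have s: "0 < s" and t: "0 < t" using assms by (auto simp: s_def t_def)
  have "1 / t - (1 / s - (t\<^sup>2 - s\<^sup>2) / (2 * s ^ 3)) = (s - t)\<^sup>2 * (2 * s + t) / (2 * s ^ 3 * t)"
    using s t by (simp add: field_simps power2_eq_square power3_eq_cube)
  also have "\<dots> \<ge> 0" using s t by simp
  finally show ?thesis using assms by (simp add: s_def t_def)
qed

text \<open>Jensen's inequality for the convex function \<open>1 / sqrt\<close>, via its tangent at the mean.\<close>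
lemma inverse_sqrt_mixture_le:
  fixes x y :: "nat \<Rightarrow> real" and v :: real
  assumes v: "0 \<le> v" "v \<le> 1" and x: "x \<in> prob_simplex K" and y: "\<And>n. n < K \<Longrightarrow> 0 < y n"
  shows "1 / sqrt ((1 - v) + v * (\<Sum>n<K. x n * y n)) \<le> (1 - v) + v * (\<Sum>n<K. x n / sqrt (y n))"
proof -
  define m where "m = (1 - v) + v * (\<Sum>n<K. x n * y n)"
  have "0 < (\<Sum>n<K. y n * x n)" by (rule prob_simplex_weighted_sum_pos[OF x y])
  then have m: "0 < m" unfolding m_def using v by (intro mix_with_one_pos) (auto simp: mult.commute)
  define a b where "a = 1 / sqrt m + m / (2 * sqrt m ^ 3)" and "b = 1 / (2 * sqrt m ^ 3)"
  have tangent: "a - b * z = 1 / sqrt m - (z - m) / (2 * sqrt m ^ 3)" for z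
    using m by (simp add: a_def b_def field_simps)
  have xs: "(\<Sum>n<K. x n) = 1" and x0: "\<And>n. n < K \<Longrightarrow> 0 \<le> x n"
    using x by (auto simp: prob_simplex_def)
  have "(\<Sum>n<K. x n * (a - b * y n)) = a * (\<Sum>n<K. x n) - b * (\<Sum>n<K. x n * y n)"
    by (simp add: algebra_simps sum_subtractf sum_distrib_left)
  then have affine: "(\<Sum>n<K. x n * (a - b * y n)) = a - b * (\<Sum>n<K. x n * y n)"
    using xs by simp
  have "1 / sqrt m = a - b * m" unfolding tangent by simp
  also have "\<dots> = (1 - v) * (a - b * 1) + v * (\<Sum>n<K. x n * (a - b * y n))"
    unfolding affine m_def by (simp add: algebra_simps)
  also have "\<dots> \<le> (1 - v) * (1 / sqrt 1) + v * (\<Sum>n<K. x n * (1 / sqrt (y n)))"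
    using inverse_sqrt_above_tangent[OF m] y x0 v
    by (intro add_mono mult_left_mono sum_mono) (auto simp only: tangent)
  finally show ?thesis by (simp add: m_def)
qed

lemma sqrt_ratio_am_gm:
  fixes p l b :: real
  assumes l: "0 < l" and b: "0 < b"
  shows "p / sqrt (l / b) \<le> (p\<^sup>2 / l + b) / 2"
proof -
  define u v where "u = sqrt b" and "v = p / sqrt l"
  have "p / sqrt (l / b) = u * v"
    using l b by (simp add: u_def v_def real_sqrt_divide field_simps)
  also have "\<dots> = (u\<^sup>2 + v\<^sup>2 - (u - v)\<^sup>2) / 2" by (simp add: power2_eq_square algebra_simps)
  also have "\<dots> \<le> (u\<^sup>2 + v\<^sup>2) / 2" by simp
  finally show ?thesis using l b by (simp add: u_def v_def power_divide add.commute)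
qed

text \<open>The defect \<open>(u - v)\<^sup>2\<close> of the AM-GM step is bounded below through the intermediate
  point \<open>sqrt p\<close>: it controls \<open>(b - p)\<^sup>2\<close> up to the error \<open>(p - l)\<^sup>2\<close>.\<close>
lemma sqrt_ratio_am_gm_sharp:
  fixes p l b c :: real
  assumes c: "0 < c" "c \<le> l" and p: "0 < p" "p \<le> 1" and b: "0 < b" "b \<le> 1"
  shows "p / sqrt (l / b) \<le> (p\<^sup>2 / l + b) / 2 - (b - p)\<^sup>2 / 16 + (p - l)\<^sup>2 / (2 * c)"
proof -
  have l: "0 < l" using c by simp
  define u v q s where "u = sqrt b" and "v = p / sqrt l" and "q = sqrt p" and "s = sqrt l"
  have s: "0 < s" and q: "0 < q" "q \<le> 1" and u: "0 < u" "u \<le> 1"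
    using l p b by (auto simp: s_def q_def u_def)
  have ss: "s\<^sup>2 = l" and qq: "q\<^sup>2 = p" and uu: "u\<^sup>2 = b"
    using l p b by (simp_all add: s_def q_def u_def)
  have "p / sqrt (l / b) = u * v"
    using l b by (simp add: u_def v_def real_sqrt_divide field_simps)
  also have "\<dots> = (u\<^sup>2 + v\<^sup>2 - (u - v)\<^sup>2) / 2" by (simp add: power2_eq_square algebra_simps)
  finally have uv: "p / sqrt (l / b) = (b + p\<^sup>2 / l - (u - v)\<^sup>2) / 2"
    using l by (simp add: uu v_def power_divide)
  have bp: "(b - p)\<^sup>2 \<le> 4 * (u - q)\<^sup>2"
  proof -
    have "(b - p)\<^sup>2 = (u - q)\<^sup>2 * (u + q)\<^sup>2"
      by (simp add: uu [symmetric] qq [symmetric] power2_eq_square algebra_simps)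
    also have "\<dots> \<le> (u - q)\<^sup>2 * 4"
      using u q power_mono[of "u + q" 2 2] by (intro mult_left_mono) auto
    finally show ?thesis by simp
  qed
  have vq: "(v - q)\<^sup>2 \<le> (p - l)\<^sup>2 / c"
  proof -
    have "v - q = q * (q - s) / s"
      using s q by (simp add: v_def s_def [symmetric] qq [symmetric] field_simps power2_eq_square)
    then have "(v - q)\<^sup>2 = q\<^sup>2 * (q - s)\<^sup>2 / s\<^sup>2" by (simp add: power_mult_distrib power_divide)
    also have "\<dots> \<le> (q + s)\<^sup>2 * (q - s)\<^sup>2 / s\<^sup>2"
      using q s by (intro divide_right_mono mult_right_mono power_mono) auto
    also have "(q + s)\<^sup>2 * (q - s)\<^sup>2 = (p - l)\<^sup>2"
      by (simp add: qq [symmetric] ss [symmetric] power2_eq_square algebra_simps)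
    also have "(p - l)\<^sup>2 / s\<^sup>2 \<le> (p - l)\<^sup>2 / c"
      unfolding ss by (rule divide_left_mono) (use c in auto)
    finally show ?thesis .
  qed
  have "(u - q)\<^sup>2 \<le> 2 * (u - v)\<^sup>2 + 2 * (v - q)\<^sup>2"
    using sum_squares_ge_zero[of "u - v - (v - q)" 0] by (simp add: power2_eq_square algebra_simps)
  then have "(b - p)\<^sup>2 \<le> 8 * (u - v)\<^sup>2 + 8 * ((p - l)\<^sup>2 / c)"
    using bp vq by linarith
  moreover have "(p - l)\<^sup>2 / (2 * c) = (p - l)\<^sup>2 / c / 2" by simp
  ultimately have "(b - p)\<^sup>2 / 16 \<le> (u - v)\<^sup>2 / 2 + (p - l)\<^sup>2 / (2 * c)" by linarith
  then show ?thesis unfolding uv by argo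
qed

lemma chi_square_identity:
  fixes p l :: "nat \<Rightarrow> real"
  assumes "(\<Sum>n<K. p n) = 1" "(\<Sum>n<K. l n) = 1" and l: "\<And>n. n < K \<Longrightarrow> 0 < l n"
  shows "(\<Sum>n<K. (p n)\<^sup>2 / l n) = 1 + (\<Sum>n<K. (p n - l n)\<^sup>2 / l n)"
proof -
  have "(\<Sum>n<K. (p n - l n)\<^sup>2 / l n) = (\<Sum>n<K. (p n)\<^sup>2 / l n - 2 * p n + l n)"
  proof (rule sum.cong [OF refl])
    fix n assume "n \<in> {..<K}"
    then have "l n \<noteq> 0" using l by (metis lessThan_iff less_irrefl)
    then show "(p n - l n)\<^sup>2 / l n = (p n)\<^sup>2 / l n - 2 * p n + l n"
      by (simp add: power2_eq_square field_simps)
  qed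
  also have "\<dots> = (\<Sum>n<K. (p n)\<^sup>2 / l n) - 2 * (\<Sum>n<K. p n) + (\<Sum>n<K. l n)"
    by (simp add: sum.distrib sum_subtractf sum_distrib_left)
  finally show ?thesis using assms(1,2) by simp
qed

lemma sum_ratio_to_mixture:
  fixes l p m :: "nat \<Rightarrow> real" and a :: real
  assumes ls: "(\<Sum>n<K. l n) = 1" and ps: "(\<Sum>n<K. p n) = 1"
    and m: "\<And>n. n < K \<Longrightarrow> m n = a * l n + (1 - a) * p n" "\<And>n. n < K \<Longrightarrow> 0 < m n"
  shows "1 - (\<Sum>n<K. p n * (l n / m n)) = a * (1 - a) * (\<Sum>n<K. (l n - p n)\<^sup>2 / m n)"
proof -
  have each: "p n * (l n / m n)
      = m n - a * (1 - a) * ((l n - p n)\<^sup>2 / m n) - ((2 * a - 1) * l n - (2 * a - 1) * p n)"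
    if "n < K" for n
  proof -
    have "m n \<noteq> 0" using m(2)[OF that] by simp
    then show ?thesis unfolding m(1)[OF that] by (simp add: field_simps power2_eq_square)
  qed
  have "(\<Sum>n<K. p n * (l n / m n))
      = (\<Sum>n<K. m n - a * (1 - a) * ((l n - p n)\<^sup>2 / m n) - ((2 * a - 1) * l n - (2 * a - 1) * p n))"
    by (rule sum.cong [OF refl], rule each, simp)
  also have "\<dots> = (\<Sum>n<K. m n) - a * (1 - a) * (\<Sum>n<K. (l n - p n)\<^sup>2 / m n)
      - ((2 * a - 1) * (\<Sum>n<K. l n) - (2 * a - 1) * (\<Sum>n<K. p n))"
    by (simp only: sum_subtractf sum_distrib_left [symmetric])
  also have "(\<Sum>n<K. m n) = a * (\<Sum>n<K. l n) + (1 - a) * (\<Sum>n<K. p n)"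
    by (simp add: m sum.distrib sum_distrib_left)
  finally show ?thesis using ls ps by simp
qed

lemma summable_chi_square:
  fixes l p :: "nat \<Rightarrow> nat \<Rightarrow> real"
  assumes \<epsilon>: "0 < \<epsilon>" "\<And>t n. n < K \<Longrightarrow> \<epsilon> \<le> p t n" and l: "\<And>t n. n < K \<Longrightarrow> 0 < l t n"
    and sq: "summable (\<lambda>t. \<Sum>n<K. (l t n - p t n)\<^sup>2)"
  shows "summable (\<lambda>t. \<Sum>n<K. (p t n - l t n)\<^sup>2 / l t n)"
proof (rule summable_comparison_test_ev)
  have "eventually (\<lambda>t. (\<Sum>n<K. (l t n - p t n)\<^sup>2) < (\<epsilon> / 2)\<^sup>2) sequentially"
    using summable_LIMSEQ_zero[OF sq] \<epsilon>(1) by (intro order_tendstoD) auto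
  then show "eventually (\<lambda>t. norm (\<Sum>n<K. (p t n - l t n)\<^sup>2 / l t n) \<le> 2 / \<epsilon> * (\<Sum>n<K. (l t n - p t n)\<^sup>2)) sequentially"
  proof eventually_elim
    case (elim t)
    have "(p t n - l t n)\<^sup>2 / l t n \<le> 2 / \<epsilon> * (l t n - p t n)\<^sup>2" if n: "n < K" for n
    proof -
      have "(l t n - p t n)\<^sup>2 \<le> (\<Sum>n<K. (l t n - p t n)\<^sup>2)"
        by (rule member_le_sum) (use n in auto)
      with elim have "\<bar>l t n - p t n\<bar> < \<epsilon> / 2"
        using real_sqrt_less_mono[of "(l t n - p t n)\<^sup>2" "(\<epsilon> / 2)\<^sup>2"] \<epsilon>(1) by simp
      then have "\<epsilon> / 2 \<le> l t n" using \<epsilon>(2)[OF n, of t] by linarith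
      then have "(p t n - l t n)\<^sup>2 / l t n \<le> (p t n - l t n)\<^sup>2 / (\<epsilon> / 2)"
        using \<epsilon>(1) by (intro divide_left_mono) auto
      also have "\<dots> = 2 / \<epsilon> * (l t n - p t n)\<^sup>2" by (simp add: power2_commute field_simps)
      finally show ?thesis .
    qed
    then have "(\<Sum>n<K. (p t n - l t n)\<^sup>2 / l t n) \<le> (\<Sum>n<K. 2 / \<epsilon> * (l t n - p t n)\<^sup>2)"
      by (intro sum_mono) simp
    also have "\<dots> = 2 / \<epsilon> * (\<Sum>n<K. (l t n - p t n)\<^sup>2)"
      by (rule sum_distrib_left [symmetric])
    moreover have "0 \<le> (\<Sum>n<K. (p t n - l t n)\<^sup>2 / l t n)"
      using l by (intro sum_nonneg divide_nonneg_pos) auto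
    ultimately show ?case by simp
  qed
  show "summable (\<lambda>t. 2 / \<epsilon> * (\<Sum>n<K. (l t n - p t n)\<^sup>2))"
    using sq by (rule summable_mult)
qed

lemma prod_le_exp_sum:
  fixes q x :: "nat \<Rightarrow> real"
  assumes "\<And>s. s < t \<Longrightarrow> 0 \<le> q s \<and> q s \<le> 1 + x s"
  shows "(\<Prod>s<t. q s) \<le> exp (\<Sum>s<t. x s)"
proof -
  have "(\<Prod>s<t. q s) \<le> (\<Prod>s<t. exp (x s))"
    by (rule prod_mono) (use assms exp_ge_add_one_self order_trans in \<open>metis lessThan_iff\<close>)
  then show ?thesis by (simp add: exp_sum)
qed

lemma prod_le_exp_suminf:
  fixes q x :: "nat \<Rightarrow> real"
  assumes "\<And>s. 0 \<le> q s \<and> q s \<le> 1 + x s" "\<And>s. 0 \<le> x s" "summable x"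
  shows "(\<Prod>s<t. q s) \<le> exp (suminf x)"
proof -
  have "(\<Prod>s<t. q s) \<le> exp (\<Sum>s<t. x s)" by (rule prod_le_exp_sum) (use assms in auto)
  also have "\<dots> \<le> exp (suminf x)" using sum_le_suminf[OF assms(3)] assms(2) by simp
  finally show ?thesis .
qed

lemma liminf_pos_if_inverse_sqrt_bounded:
  fixes x :: "nat \<Rightarrow> real"
  assumes pos: "\<And>t. 0 < x t" and bound: "\<And>t. 1 / sqrt (x t) \<le> K"
  shows "0 < liminf (\<lambda>t. ereal (x t))"
proof -
  have "0 < 1 / sqrt (x 0)" using pos[of 0] by simp
  then have K: "0 < K" using bound[of 0] by linarith
  have "1 / K\<^sup>2 \<le> x t" for t
  proof -
    have "1 / K \<le> sqrt (x t)" using bound[of t] pos[of t] K by (simp add: field_simps)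
    then have "(1 / K)\<^sup>2 \<le> (sqrt (x t))\<^sup>2" using K by (intro power_mono) auto
    then show ?thesis using pos[of t] by (simp add: power_divide)
  qed
  then have "ereal (1 / K\<^sup>2) \<le> liminf (\<lambda>t. ereal (x t))" by (intro Liminf_bounded) auto
  moreover have "0 < ereal (1 / K\<^sup>2)" using K by simp
  ultimately show ?thesis by order
qed

lemma summable_if_prod_bounded_below:
  fixes q x g :: "nat \<Rightarrow> real"
  assumes q: "\<And>s. 0 < q s" "\<And>s. q s \<le> 1 + x s - g s"
    and x: "summable x" "\<And>s. 0 \<le> x s" and g: "\<And>s. 0 \<le> g s"
    and lower: "0 < d" "\<And>t. T \<le> t \<Longrightarrow> d \<le> C * (\<Prod>s<t. q s)"
  shows "summable g"
proof (rule summableI_nonneg_bounded[OF g])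
  have prod_pos: "0 < (\<Prod>s<t. q s)" for t using q(1) by (intro prod_pos) auto
  have "0 < C * (\<Prod>s<T. q s)" using lower(1) lower(2)[OF order_refl] by linarith
  then have C: "0 < C" using prod_pos by (rule zero_less_mult_pos2)
  have tail: "(\<Sum>s<t. g s) \<le> suminf x + ln C - ln d" if "T \<le> t" for t
  proof -
    have "(\<Prod>s<t. q s) \<le> exp (\<Sum>s<t. x s - g s)"
      using q by (intro prod_le_exp_sum) (auto simp: less_imp_le add_diff_eq)
    also have "\<dots> \<le> exp (suminf x - (\<Sum>s<t. g s))"
      using sum_le_suminf[OF x(1), of "{..<t}"] x(2) by (simp add: sum_subtractf)
    finally have "C * (\<Prod>s<t. q s) \<le> C * exp (suminf x - (\<Sum>s<t. g s))"
      using C by (intro mult_left_mono) auto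
    then have "d \<le> C * exp (suminf x - (\<Sum>s<t. g s))" using lower(2)[OF that] by linarith
    then have "ln d \<le> ln (C * exp (suminf x - (\<Sum>s<t. g s)))"
      using lower(1) C by (subst ln_le_cancel_iff) auto
    also have "\<dots> = ln C + (suminf x - (\<Sum>s<t. g s))" using C by (simp add: ln_mult)
    finally show ?thesis by linarith
  qed
  fix t
  have "(\<Sum>s<t. g s) \<le> (\<Sum>s<max t T. g s)" using g by (intro sum_mono2) auto
  also have "\<dots> \<le> suminf x + ln C - ln d" by (rule tail) simp
  finally show "(\<Sum>s<t. g s) \<le> suminf x + ln C - ln d" .
qed

lemma liminf_pos_imp_eventually_ge:
  fixes g :: "nat \<Rightarrow> real"
  assumes "0 < liminf (\<lambda>t. ereal (g t))"
  shows "\<exists>\<delta>>0. \<exists>T. \<forall>t\<ge>T. \<delta> \<le> g t"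
proof -
  obtain d where "0 < ereal d" and d: "ereal d < liminf (\<lambda>t. ereal (g t))"
    using ereal_dense2[OF assms] by blast
  have "eventually (\<lambda>t. ereal d < ereal (g t)) sequentially" using less_LiminfD[OF d] .
  then obtain T where "\<forall>t\<ge>T. d < g t" unfolding eventually_sequentially by auto
  with \<open>0 < ereal d\<close> show ?thesis by (auto intro: less_imp_le)
qed

section \<open>Nonnegative supermartingales\<close>

lemma nn_integral_affine_combination:
  fixes g0 :: "'a \<Rightarrow> real" and g Y :: "nat \<Rightarrow> 'a \<Rightarrow> real"
  assumes [measurable]: "g0 \<in> borel_measurable M"
    and g: "\<And>n. n < K \<Longrightarrow> g n \<in> borel_measurable M" "\<And>n. n < K \<Longrightarrow> Y n \<in> borel_measurable M"
    and nonneg: "\<And>w. w \<in> space M \<Longrightarrow> 0 \<le> g0 w"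
      "\<And>w n. w \<in> space M \<Longrightarrow> n < K \<Longrightarrow> 0 \<le> g n w" "\<And>w n. w \<in> space M \<Longrightarrow> n < K \<Longrightarrow> 0 \<le> Y n w"
  shows "(\<integral>\<^sup>+w. ennreal (g0 w + (\<Sum>n<K. g n w * Y n w)) \<partial>M)
    = (\<integral>\<^sup>+w. ennreal (g0 w) \<partial>M) + (\<Sum>n<K. \<integral>\<^sup>+w. ennreal (g n w) * ennreal (Y n w) \<partial>M)"
proof -
  have split: "ennreal (g0 w + (\<Sum>n<K. g n w * Y n w)) = ennreal (g0 w) + (\<Sum>n<K. ennreal (g n w) * ennreal (Y n w))"
    if "w \<in> space M" for w
  proof -
    have "ennreal (g0 w + (\<Sum>n<K. g n w * Y n w)) = ennreal (g0 w) + ennreal (\<Sum>n<K. g n w * Y n w)"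
      using that nonneg by (intro ennreal_plus sum_nonneg) auto
    also have "ennreal (\<Sum>n<K. g n w * Y n w) = (\<Sum>n<K. ennreal (g n w * Y n w))"
      using that nonneg by (intro sum_ennreal [symmetric]) auto
    also have "\<dots> = (\<Sum>n<K. ennreal (g n w) * ennreal (Y n w))"
      using that nonneg by (intro sum.cong refl ennreal_mult) auto
    finally show ?thesis .
  qed
  have [measurable]: "(\<lambda>w. ennreal (g n w) * ennreal (Y n w)) \<in> borel_measurable M" if "n \<in> {..<K}" for n
  proof -
    have [measurable]: "g n \<in> borel_measurable M" "Y n \<in> borel_measurable M" using that g by auto
    show ?thesis by measurable
  qed
  show ?thesis
    by (simp add: split nn_integral_add nn_integral_sum borel_measurable_sum cong: nn_integral_cong)
qed

locale filtered_prob_space = prob_space M for M :: "'w measure" +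
  fixes F :: "nat \<Rightarrow> 'w measure"
  assumes filtration: "filtration_on M F"
begin

lemma subalgebra_F: "subalgebra M (F t)"
  using filtration by (simp add: filtration_on_def)

lemma space_F [simp]: "space (F t) = space M"
  using subalgebra_F by (simp add: subalgebra_def)

lemma sets_F_imp_sets: "A \<in> sets (F t) \<Longrightarrow> A \<in> sets M"
  using subalgebra_F by (auto simp: subalgebra_def)

lemma measurable_F_mono: "s \<le> t \<Longrightarrow> f \<in> borel_measurable (F s) \<Longrightarrow> f \<in> borel_measurable (F t)"
  using filtration by (intro measurable_from_subalg[of "F t" "F s"]) (auto simp: subalgebra_def filtration_on_def)

lemma measurable_F_imp_measurable: "f \<in> borel_measurable (F t) \<Longrightarrow> f \<in> borel_measurable M"
  by (rule measurable_from_subalg[OF subalgebra_F])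

lemma sigma_finite_subalgebra_F: "sigma_finite_subalgebra M (F t)"
  using subalgebra_F finite_measure_axioms
  by (intro finite_measure_subalgebra_is_sigma_finite)
     (simp add: finite_measure_subalgebra_def finite_measure_subalgebra_axioms_def)

definition nonneg_supermartingale :: "(nat \<Rightarrow> 'w \<Rightarrow> real) \<Rightarrow> bool" where
  "nonneg_supermartingale Z \<longleftrightarrow>
     (\<forall>t. Z t \<in> borel_measurable (F t)) \<and> (\<forall>t. \<forall>w\<in>space M. 0 \<le> Z t w) \<and>
     (\<forall>t. \<forall>B\<in>sets (F t).
        (\<integral>\<^sup>+w. ennreal (Z (Suc t) w) * indicator B w \<partial>M) \<le> (\<integral>\<^sup>+w. ennreal (Z t w) * indicator B w \<partial>M))"

definition stays_below :: "(nat \<Rightarrow> 'w \<Rightarrow> real) \<Rightarrow> real \<Rightarrow> nat \<Rightarrow> 'w set" where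
  "stays_below Z a T = {w \<in> space M. \<forall>t\<le>T. Z t w \<le> a}"

lemma stays_below_sets_F:
  assumes "\<And>t. Z t \<in> borel_measurable (F t)"
  shows "stays_below Z a T \<in> sets (F T)"
proof -
  have [measurable]: "Z t \<in> borel_measurable (F T)" if "t \<le> T" for t
    using measurable_F_mono[OF that assms] .
  have "stays_below Z a T = {w \<in> space (F T). \<forall>t\<in>{..T}. Z t w \<le> a}" by (auto simp: stays_below_def)
  also have "\<dots> \<in> sets (F T)" by measurable
  finally show ?thesis .
qed

text \<open>The integral below is the expectation at time \<open>T\<close> of \<open>Z\<close> stopped when it first exceeds
  \<open>a\<close>, with the overshoot cut down to \<open>a\<close>; the supermartingale property makes it nonincreasing in \<open>T\<close>.\<close>
lemma nonneg_supermartingale_stopped_le: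
  assumes Z: "nonneg_supermartingale Z" and start: "\<And>w. w \<in> space M \<Longrightarrow> Z 0 w \<le> c"
    and a: "0 \<le> a"
  shows "(\<integral>\<^sup>+w. ennreal (Z T w) * indicator (stays_below Z a T) w
      + ennreal a * indicator (space M - stays_below Z a T) w \<partial>M) \<le> ennreal c"
proof (induction T)
  case 0
  have "(\<integral>\<^sup>+w. ennreal (Z 0 w) * indicator (stays_below Z a 0) w
      + ennreal a * indicator (space M - stays_below Z a 0) w \<partial>M) \<le> (\<integral>\<^sup>+w. ennreal c \<partial>M)"
    using start by (intro nn_integral_mono) (fastforce simp: stays_below_def indicator_def intro: ennreal_leI)
  then show ?case by (simp add: emeasure_space_1)
next
  case (Suc T)
  let ?A = "stays_below Z a T"
  have adapted: "\<And>t. Z t \<in> borel_measurable (F t)"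
    and step: "\<And>t B. B \<in> sets (F t) \<Longrightarrow>
       (\<integral>\<^sup>+w. ennreal (Z (Suc t) w) * indicator B w \<partial>M) \<le> (\<integral>\<^sup>+w. ennreal (Z t w) * indicator B w \<partial>M)"
    using Z by (auto simp: nonneg_supermartingale_def)
  have A_F: "?A \<in> sets (F T)" using stays_below_sets_F[OF adapted] .
  have [measurable]: "?A \<in> sets M" "Z t \<in> borel_measurable M" for t
    using sets_F_imp_sets[OF A_F] measurable_F_imp_measurable[OF adapted] by auto
  have "(\<integral>\<^sup>+w. ennreal (Z (Suc T) w) * indicator (stays_below Z a (Suc T)) w
      + ennreal a * indicator (space M - stays_below Z a (Suc T)) w \<partial>M)
    \<le> (\<integral>\<^sup>+w. ennreal (Z (Suc T) w) * indicator ?A w + ennreal a * indicator (space M - ?A) w \<partial>M)"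
    using a by (intro nn_integral_mono) (auto simp: stays_below_def indicator_def le_Suc_eq)
  also have "\<dots> = (\<integral>\<^sup>+w. ennreal (Z (Suc T) w) * indicator ?A w \<partial>M) + (\<integral>\<^sup>+w. ennreal a * indicator (space M - ?A) w \<partial>M)"
    by (rule nn_integral_add) auto
  also have "\<dots> \<le> (\<integral>\<^sup>+w. ennreal (Z T w) * indicator ?A w \<partial>M) + (\<integral>\<^sup>+w. ennreal a * indicator (space M - ?A) w \<partial>M)"
    using step[OF A_F] by (rule add_right_mono)
  also have "\<dots> = (\<integral>\<^sup>+w. ennreal (Z T w) * indicator ?A w + ennreal a * indicator (space M - ?A) w \<partial>M)"
    by (rule nn_integral_add [symmetric]) auto
  finally show ?case using Suc by order
qed

lemma nonneg_supermartingale_maximal_ineq: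
  assumes Z: "nonneg_supermartingale Z" and start: "\<And>w. w \<in> space M \<Longrightarrow> Z 0 w \<le> c"
    and a: "0 \<le> a"
  shows "ennreal a * emeasure M {w \<in> space M. \<exists>t\<le>T. a < Z t w} \<le> ennreal c"
proof -
  have "stays_below Z a T \<in> sets M"
    using Z by (intro sets_F_imp_sets[of _ T] stays_below_sets_F) (auto simp: nonneg_supermartingale_def)
  then have "ennreal a * emeasure M (space M - stays_below Z a T)
    \<le> (\<integral>\<^sup>+w. ennreal (Z T w) * indicator (stays_below Z a T) w
      + ennreal a * indicator (space M - stays_below Z a T) w \<partial>M)"
    by (subst nn_integral_cmult_indicator [symmetric]) (auto intro!: nn_integral_mono)
  also have "\<dots> \<le> ennreal c" by (rule nonneg_supermartingale_stopped_le[OF Z start a])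
  also have "space M - stays_below Z a T = {w \<in> space M. \<exists>t\<le>T. a < Z t w}"
    by (auto simp: stays_below_def not_le)
  finally show ?thesis .
qed

lemma nonneg_supermartingale_bounded:
  assumes Z: "nonneg_supermartingale Z" and start: "\<And>w. w \<in> space M \<Longrightarrow> Z 0 w \<le> c"
  shows "AE w in M. \<exists>C. \<forall>t. Z t w \<le> C"
proof -
  have [measurable]: "Z t \<in> borel_measurable M" for t
    using Z measurable_F_imp_measurable by (auto simp: nonneg_supermartingale_def)
  define B where "B a = {w \<in> space M. \<exists>t. a < Z t w}" for a
  have B_M [measurable]: "B a \<in> sets M" for a unfolding B_def by measurable
  have B_bound: "real k * prob (B (real k)) \<le> c" for k
  proof -
    have "B (real k) = (\<Union>T. {w \<in> space M. \<exists>t\<le>T. real k < Z t w})"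
      by (auto simp: B_def)
    moreover have "incseq (\<lambda>T. {w \<in> space M. \<exists>t\<le>T. real k < Z t w})"
      by (auto simp: incseq_def intro: order_trans)
    moreover have "{w \<in> space M. \<exists>t\<le>T. real k < Z t w} \<in> sets M" for T by measurable
    ultimately have "emeasure M (B (real k)) = (SUP T. emeasure M {w \<in> space M. \<exists>t\<le>T. real k < Z t w})"
      by (simp add: SUP_emeasure_incseq image_subset_iff)
    then have "ennreal (real k) * emeasure M (B (real k)) \<le> ennreal c"
      using nonneg_supermartingale_maximal_ineq[OF Z start] by (simp add: SUP_mult_left_ennreal SUP_least)
    moreover obtain w where w: "w \<in> space M" using not_empty by blast
    then have "0 \<le> Z 0 w" using Z by (simp add: nonneg_supermartingale_def)
    then have "0 \<le> c" using start[OF w] by linarith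
    ultimately show ?thesis by (simp add: emeasure_eq_measure ennreal_mult [symmetric])
  qed
  define S where "S = (\<Inter>k. B (real k))"
  have "prob S \<le> 0"
  proof (rule ccontr)
    assume "\<not> prob S \<le> 0"
    then have "0 < prob S" by simp
    then obtain k where "c < real k * prob S" using ex_less_of_nat_mult by blast
    moreover have "real k * prob S \<le> real k * prob (B (real k))"
      unfolding S_def by (intro mult_left_mono finite_measure_mono) auto
    ultimately show False using B_bound[of k] by linarith
  qed
  moreover have "S \<in> sets M" unfolding S_def by measurable
  ultimately have "S \<in> null_sets M" by (simp add: emeasure_eq_measure measure_le_0_iff null_sets_def)
  then show ?thesis
    by (rule AE_I') (auto simp: S_def B_def not_le intro: less_le_trans)
qed

lemma nonneg_supermartingale_ratio_bounded:
  fixes V g :: "nat \<Rightarrow> 'w \<Rightarrow> real"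
  assumes Z: "nonneg_supermartingale (\<lambda>t w. V t w / (\<Prod>s<t. g s w))"
    and g: "\<And>t w. w \<in> space M \<Longrightarrow> 0 < g t w" and start: "\<And>w. w \<in> space M \<Longrightarrow> V 0 w \<le> c"
  shows "AE w in M. \<exists>C. \<forall>t. V t w \<le> C * (\<Prod>s<t. g s w)"
proof -
  have "AE w in M. \<exists>C. \<forall>t. V t w / (\<Prod>s<t. g s w) \<le> C"
    using Z by (rule nonneg_supermartingale_bounded[where c = c]) (simp add: start)
  then show ?thesis
  proof (rule AE_mp [OF _ AE_I2], safe)
    fix w C assume "w \<in> space M" "\<forall>t. V t w / (\<Prod>s<t. g s w) \<le> C"
    moreover have "0 < (\<Prod>s<t. g s w)" if "w \<in> space M" for t using g that by (intro prod_pos) auto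
    ultimately show "\<exists>C. \<forall>t. V t w \<le> C * (\<Prod>s<t. g s w)" by (auto simp: divide_le_eq)
  qed
qed

end

section \<open>The market\<close>

locale market = filtered_prob_space M F for M :: "'w measure" and F +
  fixes X :: "nat \<Rightarrow> 'w \<Rightarrow> nat \<Rightarrow> real" and N :: nat and \<epsilon> :: real
  assumes X_measurable_F: "\<forall>t\<ge>1. \<forall>n<N. (\<lambda>w. X t w n) \<in> borel_measurable (F t)"
    and X_prob_simplex: "\<forall>t\<ge>1. \<forall>w\<in>space M. X t w \<in> prob_simplex N"
    and eps_pos: "\<epsilon> > 0"
    and mu_ge_eps: "\<forall>t. \<forall>n<N. AE w in M. \<epsilon> \<le> mu M F X t w n"
begin

lemma X_Suc_prob_simplex: "w \<in> space M \<Longrightarrow> X (Suc t) w \<in> prob_simplex N"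
  using X_prob_simplex by simp

lemma N_pos: "0 < N"
proof -
  obtain w where "w \<in> space M" using not_empty by blast
  from X_Suc_prob_simplex[OF this, of 0] show ?thesis by (cases N) (auto simp: prob_simplex_def)
qed

lemma X_nonneg: "w \<in> space M \<Longrightarrow> n < N \<Longrightarrow> 0 \<le> X (Suc t) w n"
  using X_Suc_prob_simplex by (simp add: prob_simplex_def)

lemma X_sum: "w \<in> space M \<Longrightarrow> (\<Sum>n<N. X (Suc t) w n) = 1"
  using X_Suc_prob_simplex by (simp add: prob_simplex_def)

lemma X_le_1: "w \<in> space M \<Longrightarrow> n < N \<Longrightarrow> X (Suc t) w n \<le> 1"
  using X_Suc_prob_simplex prob_simplex_le_1 by blast

lemma X_measurable: "n < N \<Longrightarrow> (\<lambda>w. X (Suc t) w n) \<in> borel_measurable (F (Suc t))"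
  using X_measurable_F by simp

lemma X_measurable_M [measurable]: "n < N \<Longrightarrow> (\<lambda>w. X (Suc t) w n) \<in> borel_measurable M"
  using measurable_F_imp_measurable[OF X_measurable] .

lemma mu_measurable [measurable]: "(\<lambda>w. mu M F X t w n) \<in> borel_measurable (F t)"
  by (simp add: mu_def)

lemma nn_cond_exp_X:
  assumes "n < N"
  shows "AE w in M. nn_cond_exp M (F t) (\<lambda>w. ennreal (X (Suc t) w n)) w = ennreal (mu M F X t w n)"
proof -
  interpret S: sigma_finite_subalgebra M "F t" by (rule sigma_finite_subalgebra_F)
  \<comment> \<open>\<open>real_cond_exp\<close> is the difference of the \<open>nn_cond_exp\<close> of the positive and negative parts\<close>
  have "AE w in M. nn_cond_exp M (F t) (\<lambda>w. ennreal (- X (Suc t) w n)) w = nn_cond_exp M (F t) (\<lambda>w. 0) w"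
    by (rule S.nn_cond_exp_cong) (use X_nonneg assms in \<open>auto simp: ennreal_neg\<close>)
  moreover have "AE w in M. 0 = nn_cond_exp M (F t) (\<lambda>w. 0) w"
    by (rule S.nn_cond_exp_F_meas) auto
  moreover have "AE w in M. nn_cond_exp M (F t) (\<lambda>w. ennreal (X (Suc t) w n)) w \<le> nn_cond_exp M (F t) (\<lambda>w. 1) w"
    by (rule S.nn_cond_exp_mono) (use X_le_1 assms in auto)
  moreover have "AE w in M. 1 = nn_cond_exp M (F t) (\<lambda>w. 1) w"
    by (rule S.nn_cond_exp_F_meas) auto
  ultimately show ?thesis
  proof eventually_elim
    case (elim w)
    then have "nn_cond_exp M (F t) (\<lambda>w. ennreal (X (Suc t) w n)) w \<le> 1" by simp
    then have "nn_cond_exp M (F t) (\<lambda>w. ennreal (X (Suc t) w n)) w < top"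
      using ennreal_one_less_top le_less_trans by blast
    with elim show ?case by (simp add: mu_def real_cond_exp_def)
  qed
qed

lemma nn_integral_mult_X_eq_mu:
  assumes g: "g \<in> borel_measurable (F t)" and n: "n < N"
  shows "(\<integral>\<^sup>+w. ennreal (g w) * ennreal (X (Suc t) w n) \<partial>M)
       = (\<integral>\<^sup>+w. ennreal (g w) * ennreal (mu M F X t w n) \<partial>M)"
proof -
  interpret S: sigma_finite_subalgebra M "F t" by (rule sigma_finite_subalgebra_F)
  have "(\<integral>\<^sup>+w. ennreal (g w) * ennreal (X (Suc t) w n) \<partial>M)
     = (\<integral>\<^sup>+w. ennreal (g w) * nn_cond_exp M (F t) (\<lambda>w. ennreal (X (Suc t) w n)) w \<partial>M)"
    by (rule S.nn_cond_exp_intg [symmetric]) (use g n in auto)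
  also have "\<dots> = (\<integral>\<^sup>+w. ennreal (g w) * ennreal (mu M F X t w n) \<partial>M)"
    by (rule nn_integral_cong_AE) (use nn_cond_exp_X[OF n, of t] in \<open>eventually_elim, simp\<close>)
  finally show ?thesis .
qed

lemma AE_mu_sum: "AE w in M. (\<Sum>n<N. mu M F X t w n) = 1"
proof -
  interpret S: sigma_finite_subalgebra M "F t" by (rule sigma_finite_subalgebra_F)
  define Y where "Y n = (if n < N then (\<lambda>w. X (Suc t) w n) else (\<lambda>w. 0))" for n
  have [measurable]: "Y n \<in> borel_measurable M" for n
    by (cases "n < N") (simp_all add: Y_def)
  have Y_integrable: "integrable M (Y n)" for n
    using X_nonneg X_le_1 by (auto simp: Y_def intro!: integrable_const_bound[where B = 1])
  have sum_mu: "(\<Sum>n<N. real_cond_exp M (F t) (Y n) w) = (\<Sum>n<N. mu M F X t w n)" for w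
    by (rule sum.cong) (auto simp: Y_def mu_def)
  have "AE w in M. real_cond_exp M (F t) (\<lambda>w. \<Sum>n<N. Y n w) w = (\<Sum>n<N. real_cond_exp M (F t) (Y n) w)"
    using Y_integrable by (rule S.real_cond_exp_sum)
  moreover have "AE w in M. real_cond_exp M (F t) (\<lambda>w. \<Sum>n<N. Y n w) w = real_cond_exp M (F t) (\<lambda>w. 1) w"
    using Y_integrable by (intro S.real_cond_exp_cong) (auto simp: Y_def X_sum)
  moreover have "AE w in M. real_cond_exp M (F t) (\<lambda>w. 1) w = 1"
    by (rule S.real_cond_exp_F_meas) auto
  ultimately show ?thesis by eventually_elim (simp add: sum_mu)
qed

text \<open>The conditional expectation \<open>mu\<close> lies in the simplex, with components at least \<open>\<epsilon>\<close>,
  only almost surely. The version \<open>mu_reg\<close> does so everywhere and agrees with \<open>mu\<close> almost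
  surely, for all \<open>t\<close> at once.\<close>
definition mu_regular :: "nat \<Rightarrow> 'w \<Rightarrow> bool" where
  "mu_regular t w \<longleftrightarrow> (\<forall>n<N. \<epsilon> \<le> mu M F X t w n) \<and> (\<Sum>n<N. mu M F X t w n) = 1"

definition mu_reg :: "nat \<Rightarrow> 'w \<Rightarrow> nat \<Rightarrow> real" where
  "mu_reg t w n = (if mu_regular t w then mu M F X t w n else 1 / real N)"

lemma mu_reg_measurable [measurable]: "(\<lambda>w. mu_reg t w n) \<in> borel_measurable (F t)"
  unfolding mu_reg_def mu_regular_def by measurable

lemma mu_reg_ge_eps: "mu_regular t w \<Longrightarrow> n < N \<Longrightarrow> \<epsilon> \<le> mu_reg t w n"
  by (simp add: mu_reg_def mu_regular_def)

lemma mu_reg_pos: "n < N \<Longrightarrow> 0 < mu_reg t w n"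
  using eps_pos N_pos by (auto simp: mu_reg_def mu_regular_def intro: less_le_trans)

lemma mu_reg_eq: "mu_regular t w \<Longrightarrow> mu_reg t w = mu M F X t w"
  by (simp add: mu_reg_def fun_eq_iff)

lemma mu_reg_sum: "(\<Sum>n<N. mu_reg t w n) = 1"
proof (cases "mu_regular t w")
  case True
  then show ?thesis by (simp add: mu_reg_eq mu_regular_def)
next
  case False
  then show ?thesis using N_pos by (simp add: mu_reg_def)
qed

lemma mu_reg_prob_simplex: "mu_reg t w \<in> prob_simplex N"
  using mu_reg_pos mu_reg_sum by (simp add: prob_simplex_def less_imp_le)

lemma mu_reg_le_1: "n < N \<Longrightarrow> mu_reg t w n \<le> 1"
  using mu_reg_prob_simplex prob_simplex_le_1 by blast

lemma AE_mu_regular: "AE w in M. \<forall>t. mu_regular t w"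
proof -
  have "AE w in M. mu_regular t w" for t
  proof -
    have "AE w in M. \<forall>n<N. \<epsilon> \<le> mu M F X t w n"
      using mu_ge_eps by (subst AE_all_countable) auto
    with AE_mu_sum[of t] show ?thesis by eventually_elim (simp add: mu_regular_def)
  qed
  then show ?thesis by (simp add: AE_all_countable)
qed

lemma nn_integral_affine_X_eq_mu_reg:
  fixes g0 :: "'w \<Rightarrow> real" and g :: "nat \<Rightarrow> 'w \<Rightarrow> real"
  assumes g0: "g0 \<in> borel_measurable (F t)" "\<And>w. w \<in> space M \<Longrightarrow> 0 \<le> g0 w"
    and g: "\<And>n. n < N \<Longrightarrow> g n \<in> borel_measurable (F t)" "\<And>w n. w \<in> space M \<Longrightarrow> n < N \<Longrightarrow> 0 \<le> g n w"
  shows "(\<integral>\<^sup>+w. ennreal (g0 w + (\<Sum>n<N. g n w * X (Suc t) w n)) \<partial>M)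
       = (\<integral>\<^sup>+w. ennreal (g0 w + (\<Sum>n<N. g n w * mu_reg t w n)) \<partial>M)"
proof -
  have measurable: "g0 \<in> borel_measurable M" "\<And>n. n < N \<Longrightarrow> g n \<in> borel_measurable M"
    using g0(1) g(1) by (auto intro: measurable_F_imp_measurable)
  have mu_reg_measurable_M: "(\<lambda>w. mu_reg t w n) \<in> borel_measurable M" for n
    by (rule measurable_F_imp_measurable[OF mu_reg_measurable])
  have "(\<integral>\<^sup>+w. ennreal (g n w) * ennreal (X (Suc t) w n) \<partial>M) = (\<integral>\<^sup>+w. ennreal (g n w) * ennreal (mu_reg t w n) \<partial>M)"
    if "n < N" for n
    unfolding nn_integral_mult_X_eq_mu[OF g(1) that, OF that]
    by (rule nn_integral_cong_AE) (use AE_mu_regular in \<open>eventually_elim, simp add: mu_reg_eq\<close>)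
  then show ?thesis
    using measurable mu_reg_measurable_M g0(2) g(2) X_nonneg mu_reg_pos
    by (simp add: nn_integral_affine_combination[where Y = "\<lambda>n w. X (Suc t) w n"]
        nn_integral_affine_combination[where Y = "\<lambda>n w. mu_reg t w n"] less_imp_le)
qed

lemma supermartingale_step:
  assumes G: "G \<in> borel_measurable (F t)" "\<And>w. w \<in> space M \<Longrightarrow> 0 \<le> G w"
    and v: "v \<in> borel_measurable (F t)" "\<And>w. w \<in> space M \<Longrightarrow> 0 \<le> v w \<and> v w \<le> 1"
    and h: "\<And>n. n < N \<Longrightarrow> (\<lambda>w. h w n) \<in> borel_measurable (F t)" "\<And>w n. w \<in> space M \<Longrightarrow> n < N \<Longrightarrow> 0 \<le> h w n"
    and Z': "Z' \<in> borel_measurable M"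
      "\<And>w. w \<in> space M \<Longrightarrow> Z' w \<le> G w * ((1 - v w) + v w * (\<Sum>n<N. X (Suc t) w n * h w n))"
    and Z: "\<And>w. w \<in> space M \<Longrightarrow> G w * ((1 - v w) + v w * (\<Sum>n<N. mu_reg t w n * h w n)) \<le> Z w"
    and B: "B \<in> sets (F t)"
  shows "(\<integral>\<^sup>+w. ennreal (Z' w) * indicator B w \<partial>M) \<le> (\<integral>\<^sup>+w. ennreal (Z w) * indicator B w \<partial>M)"
proof -
  define g0 where "g0 w = G w * (1 - v w) * indicator B w" for w
  define g where "g n w = G w * v w * h w n * indicator B w" for n w
  have g0_eq: "G w * ((1 - v w) + v w * (\<Sum>n<N. Y n * h w n)) * indicator B w = g0 w + (\<Sum>n<N. g n w * Y n)"
    for w and Y :: "nat \<Rightarrow> real"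
    by (simp add: g0_def g_def algebra_simps sum_distrib_left sum_distrib_right)
  have [measurable]: "B \<in> sets (F t)" using B .
  have "(\<integral>\<^sup>+w. ennreal (Z' w) * indicator B w \<partial>M) \<le> (\<integral>\<^sup>+w. ennreal (g0 w + (\<Sum>n<N. g n w * X (Suc t) w n)) \<partial>M)"
    using Z'(2) by (intro nn_integral_mono) (auto simp: indicator_def g0_eq [symmetric] intro: ennreal_leI)
  also have "\<dots> = (\<integral>\<^sup>+w. ennreal (g0 w + (\<Sum>n<N. g n w * mu_reg t w n)) \<partial>M)"
    using G v h by (intro nn_integral_affine_X_eq_mu_reg) (auto simp: g0_def g_def)
  also have "\<dots> \<le> (\<integral>\<^sup>+w. ennreal (Z w) * indicator B w \<partial>M)"
    using Z by (intro nn_integral_mono) (auto simp: indicator_def g0_eq [symmetric] intro: ennreal_leI)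
  finally show ?thesis .
qed

text \<open>If \<open>V\<close> is multiplied at each step by a mixture, with \<open>F\<^sub>t\<close>-measurable weights, of \<open>1\<close>
  and of \<open>X\<^sub>t\<^sub>+\<^sub>1\<close>, then dividing \<open>V\<close> by the product of the conditional expectations \<open>g\<close> of
  these factors leaves a supermartingale.\<close>
lemma normalized_process_supermartingale:
  fixes V v g :: "nat \<Rightarrow> 'w \<Rightarrow> real" and h :: "nat \<Rightarrow> 'w \<Rightarrow> nat \<Rightarrow> real"
  assumes V: "\<And>t. V t \<in> borel_measurable (F t)" "\<And>t w. w \<in> space M \<Longrightarrow> 0 \<le> V t w"
    and v: "\<And>t. v t \<in> borel_measurable (F t)" "\<And>t w. w \<in> space M \<Longrightarrow> 0 \<le> v t w \<and> v t w \<le> 1"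
    and h: "\<And>t n. n < N \<Longrightarrow> (\<lambda>w. h t w n) \<in> borel_measurable (F t)"
      "\<And>t w n. w \<in> space M \<Longrightarrow> n < N \<Longrightarrow> 0 \<le> h t w n"
    and g: "\<And>t w. g t w = (1 - v t w) + v t w * (\<Sum>n<N. mu_reg t w n * h t w n)"
      "\<And>t w. w \<in> space M \<Longrightarrow> 0 < g t w"
    and step: "\<And>t w. w \<in> space M \<Longrightarrow>
      V (Suc t) w \<le> V t w * ((1 - v t w) + v t w * (\<Sum>n<N. X (Suc t) w n * h t w n))"
  shows "nonneg_supermartingale (\<lambda>t w. V t w / (\<Prod>s<t. g s w))"
proof -
  define Z where "Z t w = V t w / (\<Prod>s<t. g s w)" for t w
  have prod_pos: "0 < (\<Prod>s<t. g s w)" if "w \<in> space M" for t w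
    using g(2) that by (intro prod_pos) auto
  have g_measurable: "g t \<in> borel_measurable (F t)" for t
  proof -
    have [measurable]: "(\<lambda>w. h t w n) \<in> borel_measurable (F t)" if "n \<in> {..<N}" for n
      using h(1) that by simp
    have [measurable]: "v t \<in> borel_measurable (F t)" using v(1) .
    have "g t = (\<lambda>w. (1 - v t w) + v t w * (\<Sum>n<N. mu_reg t w n * h t w n))" by (simp add: fun_eq_iff g(1))
    also have "\<dots> \<in> borel_measurable (F t)" by measurable
    finally show ?thesis .
  qed
  have Z_measurable: "Z t \<in> borel_measurable (F t)" for t
  proof -
    have "(\<lambda>w. \<Prod>s<t. g s w) \<in> borel_measurable (F t)"
      by (intro borel_measurable_prod measurable_F_mono[OF _ g_measurable]) auto
    then show ?thesis unfolding Z_def using V(1) by (intro borel_measurable_divide) auto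
  qed
  have Z_nonneg: "0 \<le> Z t w" if "w \<in> space M" for t w
    unfolding Z_def using V(2)[OF that] prod_pos[OF that] by (rule divide_nonneg_pos)
  have "nonneg_supermartingale Z"
    unfolding nonneg_supermartingale_def
  proof (intro conjI allI ballI)
    fix t B assume B: "B \<in> sets (F t)"
    show "(\<integral>\<^sup>+w. ennreal (Z (Suc t) w) * indicator B w \<partial>M) \<le> (\<integral>\<^sup>+w. ennreal (Z t w) * indicator B w \<partial>M)"
    proof (rule supermartingale_step[where G = "\<lambda>w. Z t w / g t w" and v = "v t" and h = "h t"])
      show "(\<lambda>w. Z t w / g t w) \<in> borel_measurable (F t)"
        using Z_measurable g_measurable by (rule borel_measurable_divide)
      show "Z (Suc t) \<in> borel_measurable M" by (rule measurable_F_imp_measurable[OF Z_measurable])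
      fix w assume w: "w \<in> space M"
      show "0 \<le> Z t w / g t w" by (intro divide_nonneg_pos Z_nonneg[OF w] g(2)[OF w])
      have "Z (Suc t) w = V (Suc t) w / ((\<Prod>s<t. g s w) * g t w)" by (simp add: Z_def)
      also have "\<dots> \<le> V t w * ((1 - v t w) + v t w * (\<Sum>n<N. X (Suc t) w n * h t w n)) / ((\<Prod>s<t. g s w) * g t w)"
        using step[OF w] prod_pos[OF w, of t] g(2)[OF w, of t] by (intro divide_right_mono) auto
      finally show "Z (Suc t) w \<le> Z t w / g t w * ((1 - v t w) + v t w * (\<Sum>n<N. X (Suc t) w n * h t w n))"
        by (simp add: Z_def field_simps)
      show "Z t w / g t w * ((1 - v t w) + v t w * (\<Sum>n<N. mu_reg t w n * h t w n)) \<le> Z t w"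
        using g(2)[OF w, of t] by (simp flip: g(1))
    qed (use v h B in auto)
  qed (use Z_measurable Z_nonneg in auto)
  then show ?thesis by (simp add: Z_def [abs_def])
qed

end

section \<open>Wealth dynamics\<close>

locale profile = market M F X N \<epsilon> for M :: "'w measure" and F X N \<epsilon> +
  fixes Ma :: nat and nus :: "nat \<Rightarrow> nat \<Rightarrow> 'w \<Rightarrow> real" and lams :: "nat \<Rightarrow> nat \<Rightarrow> 'w \<Rightarrow> nat \<Rightarrow> real"
    and W0 :: "nat \<Rightarrow> real"
  assumes admissible: "admissible_profile M F N Ma nus lams"
    and W0_pos: "\<forall>k<Ma. 0 < W0 k" and W0_sum: "(\<Sum>k<Ma. W0 k) = 1"
begin

abbreviation W :: "nat \<Rightarrow> 'w \<Rightarrow> nat \<Rightarrow> real" where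
  "W \<equiv> wealth N Ma X nus lams W0"

abbreviation stake :: "nat \<Rightarrow> 'w \<Rightarrow> nat \<Rightarrow> real" where
  "stake t w n \<equiv> \<Sum>k<Ma. nus k t w * lams k t w n * W t w k"

abbreviation nbar :: "nat \<Rightarrow> 'w \<Rightarrow> real" where
  "nbar \<equiv> nu_bar N Ma X nus lams W0"

abbreviation lbar :: "nat \<Rightarrow> 'w \<Rightarrow> nat \<Rightarrow> real" where
  "lbar \<equiv> lam_bar N Ma X nus lams W0"

lemma agent_strategy: "k < Ma \<Longrightarrow> is_strategy M F N (nus k) (lams k)"
  using admissible by (simp add: admissible_profile_def)

lemma nus_measurable [measurable]: "k < Ma \<Longrightarrow> nus k t \<in> borel_measurable (F t)"
  using agent_strategy by (simp add: is_strategy_def)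

lemma lams_measurable [measurable]: "k < Ma \<Longrightarrow> n < N \<Longrightarrow> (\<lambda>w. lams k t w n) \<in> borel_measurable (F t)"
  using agent_strategy by (simp add: is_strategy_def)

lemma nus_bounds: "k < Ma \<Longrightarrow> w \<in> space M \<Longrightarrow> 0 \<le> nus k t w \<and> nus k t w \<le> 1"
  using agent_strategy by (simp add: is_strategy_def)

lemma lams_prob_simplex: "k < Ma \<Longrightarrow> w \<in> space M \<Longrightarrow> lams k t w \<in> prob_simplex N"
  using agent_strategy by (simp add: is_strategy_def)

lemma lams_nonneg: "k < Ma \<Longrightarrow> w \<in> space M \<Longrightarrow> n < N \<Longrightarrow> 0 \<le> lams k t w n"
  using lams_prob_simplex by (simp add: prob_simplex_def)

lemma lams_sum: "k < Ma \<Longrightarrow> w \<in> space M \<Longrightarrow> (\<Sum>n<N. lams k t w n) = 1"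
  using lams_prob_simplex by (simp add: prob_simplex_def)

lemma nbar_eq_sum_stake: "w \<in> space M \<Longrightarrow> nbar t w = (\<Sum>n<N. stake t w n)"
  unfolding nu_bar_def by (subst sum.swap) (simp add: lams_sum flip: sum_distrib_left sum_distrib_right)

lemma lbar_eq: "lbar t w n = stake t w n / nbar t w"
  by (simp add: lam_bar_def)

lemma wealth_Suc_sum:
  assumes w: "w \<in> space M" and stake: "\<And>n. n < N \<Longrightarrow> 0 < stake t w n"
    and sum: "(\<Sum>k<Ma. W t w k) = 1"
  shows "(\<Sum>k<Ma. W (Suc t) w k) = 1"
proof -
  have "(\<Sum>k<Ma. \<Sum>n<N. nus k t w * lams k t w n * W t w k / stake t w n * X (Suc t) w n)
      = (\<Sum>n<N. stake t w n / stake t w n * X (Suc t) w n)"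
    by (subst sum.swap, intro sum.cong refl) (simp only: sum_distrib_right sum_divide_distrib)
  also have "\<dots> = 1" using stake X_sum[OF w] by (simp add: less_imp_neq [symmetric])
  finally have "(\<Sum>k<Ma. \<Sum>n<N. nus k t w * lams k t w n * W t w k / stake t w n * X (Suc t) w n) = 1" .
  moreover have "(\<Sum>k<Ma. (1 - nus k t w) * W t w k) = 1 - nbar t w"
    using sum by (simp add: nu_bar_def algebra_simps sum_subtractf)
  ultimately show ?thesis
    by (simp add: sum.distrib nu_bar_def [symmetric] flip: sum_distrib_left)
qed

lemma wealth_Suc_pos:
  assumes w: "w \<in> space M" and k: "k < Ma" and stake: "\<And>n. n < N \<Longrightarrow> 0 < stake t w n"
    and nbar: "0 < nbar t w" and lams: "\<And>n. n < N \<Longrightarrow> 0 < lams k t w n" and Wk: "0 < W t w k"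
  shows "0 < W (Suc t) w k"
proof -
  define S where "S = (\<Sum>n<N. nus k t w * lams k t w n * W t w k / stake t w n * X (Suc t) w n)"
  have v: "0 \<le> nus k t w" "nus k t w \<le> 1" using nus_bounds[OF k w] by auto
  have "0 < nbar t w * S + (1 - nus k t w) * W t w k"
  proof (cases "nus k t w = 0")
    case True
    then show ?thesis using Wk by (simp add: S_def)
  next
    case False
    have "0 < S" unfolding S_def
      using X_Suc_prob_simplex[OF w] False v lams Wk stake by (intro prob_simplex_weighted_sum_pos) auto
    then show ?thesis using nbar v Wk by (intro add_pos_nonneg) auto
  qed
  then show ?thesis by (simp add: S_def nu_bar_def)
qed

lemma wealth_Suc_nonneg:
  assumes w: "w \<in> space M" and k: "k < Ma" and stake: "\<And>n. n < N \<Longrightarrow> 0 < stake t w n"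
    and nbar: "0 < nbar t w" and W: "\<forall>j<Ma. 0 \<le> W t w j"
  shows "0 \<le> W (Suc t) w k"
proof -
  have "0 \<le> nbar t w * (\<Sum>n<N. nus k t w * lams k t w n * W t w k / stake t w n * X (Suc t) w n)
      + (1 - nus k t w) * W t w k"
    using nus_bounds[OF k w] lams_nonneg[OF k w] X_nonneg[OF w] stake nbar W k
    by (intro add_nonneg_nonneg mult_nonneg_nonneg sum_nonneg divide_nonneg_pos) auto
  then show ?thesis by (simp add: nu_bar_def)
qed

lemma stake_pos_by_agent:
  assumes w: "w \<in> space M" and k: "k < Ma" "0 < nus k t w" "\<And>n. n < N \<Longrightarrow> 0 < lams k t w n"
    and Wk: "0 < W t w k" and W: "\<forall>j<Ma. 0 \<le> W t w j" and n: "n < N"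
  shows "0 < stake t w n"
proof -
  have "0 < nus k t w * lams k t w n * W t w k" using k Wk n by simp
  also have "\<dots> \<le> stake t w n"
    using k(1) W nus_bounds lams_nonneg w n
    by (intro member_le_sum [of k "{..<Ma}" "\<lambda>k. nus k t w * lams k t w n * W t w k"]) auto
  finally show ?thesis .
qed

lemma wealth_invariant:
  assumes w: "w \<in> space M"
  shows "(\<forall>k<Ma. 0 \<le> W t w k) \<and> (\<Sum>k<Ma. W t w k) = 1 \<and> (\<forall>n<N. 0 < stake t w n)"
proof -
  from admissible obtain k0 where "k0 < Ma" "\<forall>t. \<forall>w\<in>space M. 0 < nus k0 t w \<and> (\<forall>n<N. 0 < lams k0 t w n)"
    by (auto simp: admissible_profile_def)
  then have k0: "k0 < Ma" "\<And>t. 0 < nus k0 t w" "\<And>t n. n < N \<Longrightarrow> 0 < lams k0 t w n"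
    using w by auto
  \<comment> \<open>the agent of the standing assumption keeps positive wealth, so no stake ever vanishes\<close>
  have "(\<forall>k<Ma. 0 \<le> W t w k) \<and> (\<Sum>k<Ma. W t w k) = 1 \<and> 0 < W t w k0"
  proof (induction t)
    case 0
    then show ?case using W0_pos W0_sum k0(1) by auto
  next
    case (Suc t)
    then have W: "\<forall>k<Ma. 0 \<le> W t w k" and sum: "(\<Sum>k<Ma. W t w k) = 1" and pos: "0 < W t w k0"
      by auto
    have stake: "0 < stake t w n" if "n < N" for n
      using stake_pos_by_agent[OF w k0(1) k0(2) k0(3) pos W that] .
    have nbar: "0 < nbar t w"
      using stake N_pos by (auto simp: nbar_eq_sum_stake[OF w] intro: sum_pos)
    show ?case
      using wealth_Suc_sum[OF w stake sum] wealth_Suc_nonneg[OF w _ stake nbar W]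
        wealth_Suc_pos[OF w k0(1) stake nbar k0(3) pos] by blast
  qed
  then show ?thesis using stake_pos_by_agent[OF w k0(1)] k0 w by blast
qed

lemma W_nonneg: "w \<in> space M \<Longrightarrow> k < Ma \<Longrightarrow> 0 \<le> W t w k"
  using wealth_invariant by blast

lemma W_sum: "w \<in> space M \<Longrightarrow> (\<Sum>k<Ma. W t w k) = 1"
  using wealth_invariant by blast

lemma stake_pos: "w \<in> space M \<Longrightarrow> n < N \<Longrightarrow> 0 < stake t w n"
  using wealth_invariant by blast

lemma W_le_1: "w \<in> space M \<Longrightarrow> k < Ma \<Longrightarrow> W t w k \<le> 1"
  using member_le_sum[of k "{..<Ma}" "W t w"] W_nonneg W_sum by auto

lemma nbar_pos: "w \<in> space M \<Longrightarrow> 0 < nbar t w"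
  using stake_pos N_pos by (auto simp: nbar_eq_sum_stake intro: sum_pos)

lemma nbar_le_1: "w \<in> space M \<Longrightarrow> nbar t w \<le> 1"
proof -
  assume w: "w \<in> space M"
  have "nbar t w \<le> (\<Sum>k<Ma. W t w k)" unfolding nu_bar_def
    using nus_bounds W_nonneg w by (intro sum_mono) (auto intro: mult_left_le_one_le)
  then show ?thesis using W_sum w by simp
qed

lemma lbar_pos: "w \<in> space M \<Longrightarrow> n < N \<Longrightarrow> 0 < lbar t w n"
  by (simp add: lbar_eq stake_pos nbar_pos)

lemma lbar_sum: "w \<in> space M \<Longrightarrow> (\<Sum>n<N. lbar t w n) = 1"
  using nbar_pos[of w t] by (simp add: lbar_eq nbar_eq_sum_stake flip: sum_divide_distrib)

lemma lbar_prob_simplex: "w \<in> space M \<Longrightarrow> lbar t w \<in> prob_simplex N"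
  using lbar_pos lbar_sum by (simp add: prob_simplex_def less_imp_le)

lemma lbar_le_1: "w \<in> space M \<Longrightarrow> n < N \<Longrightarrow> lbar t w n \<le> 1"
  using lbar_prob_simplex prob_simplex_le_1 by blast

lemma wealth_Suc_eq:
  assumes w: "w \<in> space M" and m: "m < Ma"
  shows "W (Suc t) w m = W t w m * ((1 - nus m t w) + nus m t w * (\<Sum>n<N. X (Suc t) w n * (lams m t w n / lbar t w n)))"
proof -
  have "nbar t w * (\<Sum>n<N. nus m t w * lams m t w n * W t w m / stake t w n * X (Suc t) w n)
      = W t w m * nus m t w * (\<Sum>n<N. X (Suc t) w n * (lams m t w n / lbar t w n))"
    unfolding lbar_eq sum_distrib_left
    using nbar_pos[OF w] stake_pos[OF w] by (intro sum.cong) (auto simp: field_simps)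
  then show ?thesis by (simp add: nu_bar_def [symmetric] algebra_simps)
qed

lemma W_measurable [measurable]: "k < Ma \<Longrightarrow> (\<lambda>w. W t w k) \<in> borel_measurable (F t)"
proof (induction t arbitrary: k)
  case 0
  then show ?case by simp
next
  case (Suc t)
  have [measurable]: "(\<lambda>w. W t w k) \<in> borel_measurable (F (Suc t))" if "k < Ma" for k
    using measurable_F_mono[OF _ Suc.IH[OF that]] by simp
  have [measurable]: "nus k t \<in> borel_measurable (F (Suc t))" if "k < Ma" for k
    using measurable_F_mono[OF _ nus_measurable[OF that]] by simp
  have [measurable]: "(\<lambda>w. lams k t w n) \<in> borel_measurable (F (Suc t))" if "k < Ma" "n < N" for k n
    using measurable_F_mono[OF _ lams_measurable[OF that]] by simp
  have [measurable]: "(\<lambda>w. X (Suc t) w n) \<in> borel_measurable (F (Suc t))" if "n < N" for n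
    using X_measurable[OF that] .
  show ?case
    unfolding wealth.simps(2)
    by (intro borel_measurable_add borel_measurable_times borel_measurable_sum
        borel_measurable_divide borel_measurable_diff) (auto simp: Suc.prems)
qed

lemma lbar_measurable [measurable]: "n < N \<Longrightarrow> (\<lambda>w. lbar t w n) \<in> borel_measurable (F t)"
  unfolding lbar_eq nu_bar_def
  by (intro borel_measurable_divide borel_measurable_sum borel_measurable_times) auto

lemma W_pos:
  assumes w: "w \<in> space M" and m: "m < Ma" and lams: "\<And>t n. n < N \<Longrightarrow> 0 < lams m t w n"
  shows "0 < W t w m"
proof (induction t)
  case 0
  then show ?case using W0_pos m by simp
next
  case (Suc t)
  then show ?case
    using wealth_Suc_pos[OF w m stake_pos[OF w] nbar_pos[OF w] lams] by blast
qed

section \<open>Survival\<close>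

text \<open>\<open>growth\<close> is the conditional expectation of \<open>W\<^sub>t\<^sub>+\<^sub>1 / W\<^sub>t\<close> given \<open>F\<^sub>t\<close>, and by Jensen's
  inequality \<open>inv_sqrt_growth\<close> bounds that of \<open>(W\<^sub>t\<^sub>+\<^sub>1 / W\<^sub>t)\<^sup>-\<^sup>1\<^sup>/\<^sup>2\<close>.\<close>
definition growth :: "nat \<Rightarrow> nat \<Rightarrow> 'w \<Rightarrow> real" where
  "growth m t w = (1 - nus m t w) + nus m t w * (\<Sum>n<N. mu_reg t w n * (lams m t w n / lbar t w n))"

definition inv_sqrt_growth :: "nat \<Rightarrow> nat \<Rightarrow> 'w \<Rightarrow> real" where
  "inv_sqrt_growth m t w = (1 - nus m t w) + nus m t w * (\<Sum>n<N. mu_reg t w n / sqrt (lams m t w n / lbar t w n))"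

lemma growth_pos:
  assumes "m < Ma" "w \<in> space M"
  shows "0 < growth m t w"
proof -
  have "0 < (\<Sum>n<N. (mu_reg t w n / lbar t w n) * lams m t w n)"
    using assms mu_reg_pos lbar_pos lams_prob_simplex by (intro prob_simplex_weighted_sum_pos) auto
  then show ?thesis
    unfolding growth_def using nus_bounds[OF assms] by (intro mix_with_one_pos) (auto simp: field_simps)
qed

lemma inv_sqrt_growth_pos:
  assumes "m < Ma" "w \<in> space M" and lams: "\<And>n. n < N \<Longrightarrow> 0 < lams m t w n"
  shows "0 < inv_sqrt_growth m t w"
proof -
  have "0 < (\<Sum>n<N. mu_reg t w n / sqrt (lams m t w n / lbar t w n))"
    using N_pos mu_reg_pos lbar_pos[OF assms(2)] lams by (intro sum_pos) auto
  then show ?thesis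
    unfolding inv_sqrt_growth_def using nus_bounds[OF assms(1,2)] by (intro mix_with_one_pos) auto
qed

lemma wealth_bounded:
  assumes m: "m < Ma"
  shows "AE w in M. \<exists>C. \<forall>t. W t w m \<le> C * (\<Prod>s<t. growth m s w)"
proof (rule nonneg_supermartingale_ratio_bounded[OF normalized_process_supermartingale[where
    h = "\<lambda>t w n. lams m t w n / lbar t w n"]])
  show "\<And>w. w \<in> space M \<Longrightarrow> W 0 w m \<le> W0 m" by simp
  show "\<And>t w. w \<in> space M \<Longrightarrow> W (Suc t) w m
      \<le> W t w m * ((1 - nus m t w) + nus m t w * (\<Sum>n<N. X (Suc t) w n * (lams m t w n / lbar t w n)))"
    using wealth_Suc_eq m by simp
qed (use m W_nonneg nus_bounds lams_nonneg lbar_pos growth_pos in \<open>auto simp: growth_def intro: divide_nonneg_pos\<close>)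

lemma inverse_sqrt_wealth_bounded:
  assumes m: "m < Ma" and lams: "\<And>t w n. w \<in> space M \<Longrightarrow> n < N \<Longrightarrow> 0 < lams m t w n"
  shows "AE w in M. \<exists>C. \<forall>t. 1 / sqrt (W t w m) \<le> C * (\<Prod>s<t. inv_sqrt_growth m s w)"
proof (rule nonneg_supermartingale_ratio_bounded[OF normalized_process_supermartingale[where
    h = "\<lambda>t w n. 1 / sqrt (lams m t w n / lbar t w n)"]])
  show "\<And>w. w \<in> space M \<Longrightarrow> 1 / sqrt (W 0 w m) \<le> 1 / sqrt (W0 m)" by simp
  fix t w assume w: "w \<in> space M"
  have W_pos: "0 < W t w m" using W_pos[OF w m] lams w by blast
  have "1 / sqrt (W (Suc t) w m)
      = 1 / sqrt (W t w m) * (1 / sqrt ((1 - nus m t w) + nus m t w * (\<Sum>n<N. X (Suc t) w n * (lams m t w n / lbar t w n))))"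
    unfolding wealth_Suc_eq[OF w m] real_sqrt_mult by simp
  also have "\<dots> \<le> 1 / sqrt (W t w m) * ((1 - nus m t w) + nus m t w * (\<Sum>n<N. X (Suc t) w n / sqrt (lams m t w n / lbar t w n)))"
    using nus_bounds[OF m w] X_Suc_prob_simplex[OF w] lams[OF w] lbar_pos[OF w] W_pos
    by (intro mult_left_mono inverse_sqrt_mixture_le) auto
  finally show "1 / sqrt (W (Suc t) w m)
      \<le> 1 / sqrt (W t w m) * ((1 - nus m t w) + nus m t w * (\<Sum>n<N. X (Suc t) w n * (1 / sqrt (lams m t w n / lbar t w n))))"
    by simp
qed (use m lams nus_bounds lbar_pos inv_sqrt_growth_pos W_nonneg
    in \<open>auto simp: inv_sqrt_growth_def intro: divide_nonneg_pos less_imp_le\<close>)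

lemma inv_sqrt_growth_le_chi_square:
  assumes w: "w \<in> space M" and m: "m < Ma" and lams: "\<And>n. n < N \<Longrightarrow> 0 < lams m t w n"
  shows "inv_sqrt_growth m t w \<le> 1 + (\<Sum>n<N. (mu_reg t w n - lams m t w n)\<^sup>2 / lams m t w n) / 2"
proof -
  define d where "d = (\<Sum>n<N. (mu_reg t w n - lams m t w n)\<^sup>2 / lams m t w n)"
  have d: "0 \<le> d" unfolding d_def using lams by (intro sum_nonneg divide_nonneg_pos) auto
  have "(\<Sum>n<N. mu_reg t w n / sqrt (lams m t w n / lbar t w n))
      \<le> (\<Sum>n<N. ((mu_reg t w n)\<^sup>2 / lams m t w n + lbar t w n) / 2)"
    using lams lbar_pos[OF w] by (intro sum_mono sqrt_ratio_am_gm) auto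
  also have "\<dots> = ((\<Sum>n<N. (mu_reg t w n)\<^sup>2 / lams m t w n) + (\<Sum>n<N. lbar t w n)) / 2"
    by (simp add: sum.distrib flip: sum_divide_distrib)
  also have "\<dots> = 1 + d / 2"
    using chi_square_identity[OF mu_reg_sum lams_sum[OF m w] lams] lbar_sum[OF w] by (simp add: d_def)
  finally have "inv_sqrt_growth m t w \<le> 1 + nus m t w * (d / 2)"
    unfolding inv_sqrt_growth_def using nus_bounds[OF m w] by (intro mix_with_one_le) auto
  also have "\<dots> \<le> 1 + d / 2" using nus_bounds[OF m w] d by (simp add: mult_left_le_one_le)
  finally show ?thesis by (simp add: d_def)
qed

lemma inv_sqrt_growth_le_sharp:
  assumes w: "w \<in> space M" and m: "m < Ma" and c: "0 < c" "c \<le> nus m t w"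
    and lams: "\<And>n. n < N \<Longrightarrow> c \<le> lams m t w n"
  shows "inv_sqrt_growth m t w
    \<le> 1 + (\<Sum>n<N. (mu_reg t w n - lams m t w n)\<^sup>2) / c - c * (\<Sum>n<N. (lbar t w n - mu_reg t w n)\<^sup>2) / 16"
proof -
  define e f where "e = (\<Sum>n<N. (mu_reg t w n - lams m t w n)\<^sup>2)"
    and "f = (\<Sum>n<N. (lbar t w n - mu_reg t w n)\<^sup>2)"
  have lams_pos: "n < N \<Longrightarrow> 0 < lams m t w n" for n using lams c by (meson less_le_trans)
  have chi: "(\<Sum>n<N. (mu_reg t w n - lams m t w n)\<^sup>2 / lams m t w n) \<le> e / c"
    unfolding e_def sum_divide_distrib using lams c lams_pos by (intro sum_mono divide_left_mono) auto
  have "(\<Sum>n<N. mu_reg t w n / sqrt (lams m t w n / lbar t w n))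
      \<le> (\<Sum>n<N. ((mu_reg t w n)\<^sup>2 / lams m t w n + lbar t w n) / 2 - (lbar t w n - mu_reg t w n)\<^sup>2 / 16
               + (mu_reg t w n - lams m t w n)\<^sup>2 / (2 * c))"
    using c lams lbar_pos[OF w] lbar_le_1[OF w] mu_reg_pos mu_reg_le_1
    by (intro sum_mono sqrt_ratio_am_gm_sharp) auto
  also have "\<dots> = ((\<Sum>n<N. (mu_reg t w n)\<^sup>2 / lams m t w n) + (\<Sum>n<N. lbar t w n)) / 2 - f / 16 + e / (2 * c)"
    by (simp add: e_def f_def sum.distrib sum_subtractf flip: sum_divide_distrib)
  also have "\<dots> = 1 + (\<Sum>n<N. (mu_reg t w n - lams m t w n)\<^sup>2 / lams m t w n) / 2 - f / 16 + e / (2 * c)"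
    using chi_square_identity[OF mu_reg_sum lams_sum[OF m w] lams_pos] lbar_sum[OF w] by simp
  finally have "(\<Sum>n<N. mu_reg t w n / sqrt (lams m t w n / lbar t w n)) \<le> 1 + (e / c - f / 16)"
    using chi by (simp add: field_simps)
  then have "inv_sqrt_growth m t w \<le> 1 + nus m t w * (e / c - f / 16)"
    unfolding inv_sqrt_growth_def using c by (intro mix_with_one_le) auto
  also have "\<dots> \<le> 1 + e / c - c * (f / 16)"
  proof -
    have "0 \<le> e" "0 \<le> f" by (simp_all add: e_def f_def sum_nonneg)
    then have "nus m t w * (e / c) \<le> e / c" "c * (f / 16) \<le> nus m t w * (f / 16)"
      using nus_bounds[OF m w, of t] c
      by (auto intro: mult_left_le_one_le mult_right_mono simp del: times_divide_eq_right)
    then show ?thesis unfolding right_diff_distrib by linarith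
  qed
  finally show ?thesis by (simp add: e_def f_def)
qed

lemma W_liminf_pos_if_summable:
  assumes m: "m < Ma" and lams_pos: "\<And>t w n. w \<in> space M \<Longrightarrow> n < N \<Longrightarrow> 0 < lams m t w n"
    and summable: "AE w in M. summable (\<lambda>t. \<Sum>n<N. (lams m t w n - mu M F X t w n)\<^sup>2)"
  shows "AE w in M. 0 < liminf (\<lambda>t. ereal (W t w m))"
proof -
  have "AE w in M. \<exists>C. \<forall>t. 1 / sqrt (W t w m) \<le> C * (\<Prod>s<t. inv_sqrt_growth m s w)"
    by (rule inverse_sqrt_wealth_bounded[OF m]) (use lams_pos in auto)
  with AE_mu_regular summable AE_space show ?thesis
  proof eventually_elim
    case (elim w)
    then obtain C where C: "\<And>t. 1 / sqrt (W t w m) \<le> C * (\<Prod>s<t. inv_sqrt_growth m s w)" by blast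
    have w: "w \<in> space M" and regular: "\<And>t. mu_regular t w" using elim by auto
    have W_pos: "0 < W t w m" for t using W_pos[OF w m] lams_pos w by blast
    then have "0 < 1 / sqrt (W 0 w m)" using W_pos[of 0] by simp
    moreover have "1 / sqrt (W 0 w m) \<le> C" using C[of 0] by simp
    ultimately have "0 < C" by linarith
    define d where "d t = (\<Sum>n<N. (mu_reg t w n - lams m t w n)\<^sup>2 / lams m t w n)" for t
    have "summable d"
      unfolding d_def using elim lams_pos w eps_pos mu_reg_ge_eps[OF regular]
      by (intro summable_chi_square[where \<epsilon> = \<epsilon>]) (auto simp: mu_reg_eq)
    moreover have "0 \<le> d t" for t
      unfolding d_def using lams_pos w by (intro sum_nonneg divide_nonneg_pos) auto
    moreover have "inv_sqrt_growth m s w \<le> 1 + d s / 2" for s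
      using inv_sqrt_growth_le_chi_square[OF w m] lams_pos w by (simp add: d_def)
    ultimately have "(\<Prod>s<t. inv_sqrt_growth m s w) \<le> exp (\<Sum>s. d s / 2)" for t
      using inv_sqrt_growth_pos[OF m w] lams_pos w
      by (intro prod_le_exp_suminf summable_divide) (auto simp: less_imp_le)
    then have "C * (\<Prod>s<t. inv_sqrt_growth m s w) \<le> C * exp (\<Sum>s. d s / 2)" for t
      using \<open>0 < C\<close> by (intro mult_left_mono) auto
    then have "1 / sqrt (W t w m) \<le> C * exp (\<Sum>s. d s / 2)" for t using C[of t] order_trans by blast
    then show ?case using W_pos by (rule liminf_pos_if_inverse_sqrt_bounded[rotated])
  qed
qed

lemma W_liminf_pos_if_lams_eq_mu_reg:
  assumes k: "k < Ma" and lams: "\<And>t w. lams k t w = mu_reg t w"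
  shows "AE w in M. 0 < liminf (\<lambda>t. ereal (W t w k))"
proof (rule W_liminf_pos_if_summable[OF k])
  show "AE w in M. summable (\<lambda>t. \<Sum>n<N. (lams k t w n - mu M F X t w n)\<^sup>2)"
    unfolding lams using AE_mu_regular by eventually_elim (simp add: mu_reg_eq)
qed (simp add: lams mu_reg_pos)

lemma summable_lbar_if_summable:
  assumes m: "m < Ma" and c: "0 < c"
    and bounds: "\<And>t w. w \<in> space M \<Longrightarrow> c \<le> nus m t w \<and> (\<forall>n<N. c \<le> lams m t w n)"
    and summable: "AE w in M. summable (\<lambda>t. \<Sum>n<N. (lams m t w n - mu M F X t w n)\<^sup>2)"
  shows "AE w in M. summable (\<lambda>t. \<Sum>n<N. (lbar t w n - mu M F X t w n)\<^sup>2)"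
proof -
  have lams: "\<And>t w n. w \<in> space M \<Longrightarrow> n < N \<Longrightarrow> 0 < lams m t w n"
    using bounds c by (meson less_le_trans)
  have "AE w in M. \<exists>C. \<forall>t. 1 / sqrt (W t w m) \<le> C * (\<Prod>s<t. inv_sqrt_growth m s w)"
    by (rule inverse_sqrt_wealth_bounded[OF m]) (use lams in auto)
  with AE_mu_regular summable AE_space show ?thesis
  proof eventually_elim
    case (elim w)
    then obtain C where C: "\<And>t. 1 / sqrt (W t w m) \<le> C * (\<Prod>s<t. inv_sqrt_growth m s w)" by blast
    have w: "w \<in> space M" and regular: "\<And>t. mu_regular t w" using elim by auto
    define e f where "e t = (\<Sum>n<N. (mu_reg t w n - lams m t w n)\<^sup>2)"
      and "f t = (\<Sum>n<N. (lbar t w n - mu_reg t w n)\<^sup>2)" for t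
    have "e = (\<lambda>t. \<Sum>n<N. (lams m t w n - mu M F X t w n)\<^sup>2)"
      by (simp add: fun_eq_iff e_def mu_reg_eq[OF regular] power2_commute)
    then have e: "summable (\<lambda>t. e t / c)" "\<And>t. 0 \<le> e t / c"
      using elim c by (auto simp: sum_nonneg intro: summable_divide)
    have "summable (\<lambda>t. c / 16 * f t)"
    proof (rule summable_if_prod_bounded_below[OF _ _ e, where q = "\<lambda>s. inv_sqrt_growth m s w"])
      show "0 < inv_sqrt_growth m s w" for s using inv_sqrt_growth_pos[OF m w] lams w by blast
      show "inv_sqrt_growth m s w \<le> 1 + e s / c - c / 16 * f s" for s
        using inv_sqrt_growth_le_sharp[OF w m c] bounds[OF w] by (simp add: e_def f_def)
      show "0 \<le> c / 16 * f s" for s using c by (simp add: f_def sum_nonneg)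
      have "1 \<le> 1 / sqrt (W t w m)" for t
        using W_pos[OF w m] W_le_1[OF w m] lams w by (simp add: real_sqrt_le_1_iff)
      then show "1 \<le> C * (\<Prod>s<t. inv_sqrt_growth m s w)" for t using C order_trans by blast
    qed simp
    then have "summable f" using c by simp
    moreover have "f = (\<lambda>t. \<Sum>n<N. (lbar t w n - mu M F X t w n)\<^sup>2)"
      by (simp add: fun_eq_iff f_def mu_reg_eq[OF regular])
    ultimately show ?case by simp
  qed
qed

text \<open>Against an agent who bets all wealth on \<open>mu_reg\<close>, the market forecast \<open>lbar\<close> is the
  mixture of \<open>lams 0\<close> and \<open>mu_reg\<close> with weight \<open>a = nus 0 * W 0 / nbar\<close>, so
  \<open>sum_ratio_to_mixture\<close> computes \<open>1 - growth 0\<close> exactly.\<close>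
lemma growth_gap_against_mu_reg:
  assumes two: "Ma = 2" and nu1: "\<And>t w. nus 1 t w = 1" and lam1: "\<And>t w. lams 1 t w = mu_reg t w"
    and w: "w \<in> space M"
  shows "nus 0 t w * (nus 0 t w * W t w 0) * W t w 1 * (\<Sum>n<N. (lams 0 t w n - mu_reg t w n)\<^sup>2)
    \<le> 1 - growth 0 t w"
proof -
  have m: "0 < Ma" "1 < Ma" using two by auto
  define v A B a where "v = nus 0 t w" and "A = W t w 0" and "B = W t w 1" and "a = v * A / nbar t w"
  define e S where "e = (\<Sum>n<N. (lams 0 t w n - mu_reg t w n)\<^sup>2)"
    and "S = (\<Sum>n<N. (lams 0 t w n - mu_reg t w n)\<^sup>2 / lbar t w n)"
  have v: "0 \<le> v" "v \<le> 1" and AB: "0 \<le> A" "0 \<le> B"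
    using nus_bounds[OF m(1) w] W_nonneg[OF w] m by (auto simp: v_def A_def B_def)
  have nbar: "nbar t w = v * A + B"
    using nu1 two by (simp add: nu_bar_def v_def A_def B_def numeral_2_eq_2)
  have nbar_bounds: "0 < nbar t w" "nbar t w \<le> 1" using nbar_pos[OF w] nbar_le_1[OF w] by auto
  have "1 - a = (nbar t w - v * A) / nbar t w" using nbar_bounds(1) by (simp add: a_def diff_divide_distrib)
  then have one_minus_a: "1 - a = B / nbar t w" by (simp add: nbar)
  have mixture: "lbar t w n = a * lams 0 t w n + (1 - a) * mu_reg t w n" if "n < N" for n
  proof -
    have "stake t w n = v * lams 0 t w n * A + mu_reg t w n * B"
      unfolding v_def A_def B_def using two nu1 lam1 by (simp add: numeral_2_eq_2)
    then show ?thesis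
      unfolding lbar_eq one_minus_a unfolding a_def by (simp add: add_divide_distrib mult_ac)
  qed
  have "1 - growth 0 t w = v * (1 - (\<Sum>n<N. mu_reg t w n * (lams 0 t w n / lbar t w n)))"
    by (simp add: growth_def v_def right_diff_distrib)
  also have "\<dots> = v * (a * (1 - a) * S)"
    using sum_ratio_to_mixture[OF lams_sum[OF m(1) w] mu_reg_sum mixture lbar_pos[OF w]] by (simp add: S_def)
  finally have gap: "1 - growth 0 t w = v * (a * (1 - a) * S)" .
  have "e \<le> S"
    unfolding e_def S_def using lbar_pos[OF w] lbar_le_1[OF w] by (intro sum_mono le_divide_of_le_one) auto
  moreover have "v * A \<le> a" "0 \<le> a"
    using nbar_bounds v AB by (auto simp: a_def intro: le_divide_of_le_one)
  moreover have "B \<le> 1 - a"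
    unfolding one_minus_a using nbar_bounds AB by (intro le_divide_of_le_one)
  moreover have "0 \<le> e" by (simp add: e_def sum_nonneg)
  ultimately have "v * A * B * e \<le> a * (1 - a) * S"
    using AB by (intro mult_mono) auto
  then have "v * (v * A * B * e) \<le> v * (a * (1 - a) * S)" using v(1) by (rule mult_left_mono)
  then show ?thesis unfolding gap by (simp add: v_def A_def B_def e_def mult.assoc)
qed

lemma growth_against_mu_reg_le:
  assumes two: "Ma = 2" and nu1: "\<And>t w. nus 1 t w = 1" and lam1: "\<And>t w. lams 1 t w = mu_reg t w"
    and w: "w \<in> space M" and c: "0 \<le> c" "c \<le> nus 0 t w"
    and d: "0 \<le> d0" "d0 \<le> W t w 0" "0 \<le> d1" "d1 \<le> W t w 1"
  shows "growth 0 t w \<le> 1 - c * (c * d0) * d1 * (\<Sum>n<N. (lams 0 t w n - mu_reg t w n)\<^sup>2)"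
proof -
  have "c * (c * d0) * d1 \<le> nus 0 t w * (nus 0 t w * W t w 0) * W t w 1"
    using c d by (intro mult_mono) auto
  then have "c * (c * d0) * d1 * (\<Sum>n<N. (lams 0 t w n - mu_reg t w n)\<^sup>2)
      \<le> nus 0 t w * (nus 0 t w * W t w 0) * W t w 1 * (\<Sum>n<N. (lams 0 t w n - mu_reg t w n)\<^sup>2)"
    by (rule mult_right_mono) (simp add: sum_nonneg)
  with growth_gap_against_mu_reg[OF two nu1 lam1 w, of t] show ?thesis by linarith
qed

lemma summable_if_survives_against_mu_reg:
  assumes two: "Ma = 2" and nu1: "\<And>t w. nus 1 t w = 1" and lam1: "\<And>t w. lams 1 t w = mu_reg t w"
    and c: "0 < c" "\<And>t w. w \<in> space M \<Longrightarrow> c \<le> nus 0 t w"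
    and survives: "AE w in M. 0 < liminf (\<lambda>t. ereal (W t w 0))"
  shows "AE w in M. summable (\<lambda>t. \<Sum>n<N. (lams 0 t w n - mu M F X t w n)\<^sup>2)"
proof -
  have survives1: "AE w in M. 0 < liminf (\<lambda>t. ereal (W t w 1))"
    using two lam1 by (intro W_liminf_pos_if_lams_eq_mu_reg) auto
  have "AE w in M. \<exists>C. \<forall>t. W t w 0 \<le> C * (\<Prod>s<t. growth 0 s w)"
    using two by (intro wealth_bounded) simp
  with AE_mu_regular survives survives1 AE_space show ?thesis
  proof eventually_elim
    case (elim w)
    then obtain C where C: "\<And>t. W t w 0 \<le> C * (\<Prod>s<t. growth 0 s w)" by auto
    have w: "w \<in> space M" and regular: "\<And>t. mu_regular t w" using elim by auto
    obtain d0 T0 where d0: "0 < d0" "\<And>t. T0 \<le> t \<Longrightarrow> d0 \<le> W t w 0"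
      using liminf_pos_imp_eventually_ge[of "\<lambda>t. W t w 0"] elim by blast
    obtain d1 T1 where d1: "0 < d1" "\<And>t. T1 \<le> t \<Longrightarrow> d1 \<le> W t w 1"
      using liminf_pos_imp_eventually_ge[of "\<lambda>t. W t w 1"] elim by blast
    define T k where "T = max T0 T1" and "k = c * (c * d0) * d1"
    define e where "e s = (\<Sum>n<N. (lams 0 s w n - mu_reg s w n)\<^sup>2)" for s
    define g where "g s = (if T \<le> s then k * e s else 0)" for s
    have k: "0 < k" using c d0 d1 by (simp add: k_def)
    have e: "0 \<le> e s" for s by (simp add: e_def sum_nonneg)
    have "summable g"
    proof (rule summable_if_prod_bounded_below[where q = "\<lambda>s. growth 0 s w" and x = "\<lambda>s. 0"])
      show "0 < growth 0 s w" for s using growth_pos two w by simp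
      have v: "0 \<le> c" "c \<le> nus 0 s w" for s using c(1) c(2)[OF w] by auto
      show "growth 0 s w \<le> 1 + 0 - g s" for s
      proof (cases "T \<le> s")
        case True
        have "growth 0 s w \<le> 1 - c * (c * d0) * d1 * e s"
          unfolding e_def using True v d0 d1 by (intro growth_against_mu_reg_le[OF two nu1 lam1 w]) (auto simp: T_def)
        then show ?thesis using True by (simp add: g_def k_def)
      next
        case False
        have "growth 0 s w \<le> 1 - c * (c * 0) * 0 * e s"
          unfolding e_def using v W_nonneg[OF w] two by (intro growth_against_mu_reg_le[OF two nu1 lam1 w]) auto
        then show ?thesis using False by (simp add: g_def)
      qed
      show "d0 \<le> C * (\<Prod>s<t. growth 0 s w)" if "T \<le> t" for t
        using d0(2)[of t] C[of t] that by (simp add: T_def)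
    qed (use d0 k e in \<open>auto simp: g_def\<close>)
    then have "summable (\<lambda>s. g s / k)" by (rule summable_divide)
    moreover have "eventually (\<lambda>s. norm (e s) \<le> g s / k) sequentially"
      unfolding eventually_sequentially using e k by (intro exI[of _ T]) (simp add: g_def)
    ultimately have "summable e" by (rule summable_comparison_test_ev[rotated])
    moreover have "e = (\<lambda>t. \<Sum>n<N. (lams 0 t w n - mu M F X t w n)\<^sup>2)"
      by (simp add: fun_eq_iff e_def mu_reg_eq[OF regular])
    ultimately show ?case by simp
  qed
qed

end

context market
begin

lemma survival_if_summable:
  assumes lam_pos: "\<forall>t. \<forall>w\<in>space M. \<forall>n<N. 0 < lam t w n"
    and summable: "AE w in M. summable (\<lambda>t. \<Sum>n<N. (lam t w n - mu M F X t w n)\<^sup>2)"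
  shows "survival M F N X nu lam"
  unfolding survival_def
proof (intro allI impI)
  fix Ma m :: nat and nus :: "nat \<Rightarrow> nat \<Rightarrow> 'w \<Rightarrow> real"
    and lams :: "nat \<Rightarrow> nat \<Rightarrow> 'w \<Rightarrow> nat \<Rightarrow> real" and W0 :: "nat \<Rightarrow> real"
  assume A: "m < Ma \<and> admissible_profile M F N Ma nus lams \<and> nus m = nu \<and> lams m = lam \<and>
    (\<forall>k<Ma. 0 < W0 k) \<and> (\<Sum>k<Ma. W0 k) = 1"
  then interpret profile M F X N \<epsilon> Ma nus lams W0 by unfold_locales auto
  show "AE w in M. 0 < liminf (\<lambda>t. ereal (wealth N Ma X nus lams W0 t w m))"
    using A lam_pos summable by (intro W_liminf_pos_if_summable) auto
qed

lemma summable_if_survival: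
  assumes strategy: "is_strategy M F N nu lam"
    and c: "0 < c" "\<forall>t. \<forall>w\<in>space M. c \<le> nu t w"
    and survives: "survival M F N X nu lam"
  shows "AE w in M. summable (\<lambda>t. \<Sum>n<N. (lam t w n - mu M F X t w n)\<^sup>2)"
proof -
  define nus :: "nat \<Rightarrow> nat \<Rightarrow> 'w \<Rightarrow> real" where "nus k = (if k = 0 then nu else (\<lambda>t w. 1))" for k
  define lams :: "nat \<Rightarrow> nat \<Rightarrow> 'w \<Rightarrow> nat \<Rightarrow> real"
    where "lams k = (if k = 0 then lam else mu_reg)" for k
  define W0 :: "nat \<Rightarrow> real" where "W0 k = 1 / 2" for k
  have "admissible_profile M F N 2 nus lams"
    unfolding admissible_profile_def
  proof (intro conjI allI impI)
    show "is_strategy M F N (nus k) (lams k)" if "k < 2" for k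
      using strategy mu_reg_prob_simplex by (auto simp: nus_def lams_def is_strategy_def)
    show "\<exists>k<2. \<forall>t. \<forall>w\<in>space M. 0 < nus k t w \<and> (\<forall>n<N. 0 < lams k t w n)"
      using mu_reg_pos by (intro exI[of _ 1]) (auto simp: nus_def lams_def)
  qed
  moreover have "(\<Sum>k<2. W0 k) = 1" by (simp add: W0_def)
  ultimately interpret profile M F X N \<epsilon> 2 nus lams W0 by unfold_locales (auto simp: W0_def)
  have "AE w in M. 0 < liminf (\<lambda>t. ereal (W t w 0))"
    using survives admissible W0_pos W0_sum unfolding survival_def by (auto simp: nus_def lams_def)
  then have "AE w in M. summable (\<lambda>t. \<Sum>n<N. (lams 0 t w n - mu M F X t w n)\<^sup>2)"
    using c by (intro summable_if_survives_against_mu_reg) (auto simp: nus_def lams_def)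
  then show ?thesis by (simp add: lams_def)
qed

lemma summable_lam_bar_if_survival:
  assumes m: "m < Ma" and admissible: "admissible_profile M F N Ma nus lams"
    "\<forall>k<Ma. 0 < W0 k" "(\<Sum>k<Ma. W0 k) = 1"
    and survives: "survival M F N X (nus m) (lams m)"
    and c: "0 < c" "\<forall>t. \<forall>w\<in>space M. c \<le> nus m t w \<and> (\<forall>n<N. c \<le> lams m t w n)"
  shows "AE w in M. summable (\<lambda>t. \<Sum>n<N. (lam_bar N Ma X nus lams W0 t w n - mu M F X t w n)\<^sup>2)"
proof -
  interpret profile M F X N \<epsilon> Ma nus lams W0 using admissible by unfold_locales auto
  have "AE w in M. summable (\<lambda>t. \<Sum>n<N. (lams m t w n - mu M F X t w n)\<^sup>2)"
    using agent_strategy[OF m] c survives by (intro summable_if_survival[where c = c]) auto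
  then show ?thesis using m c by (intro summable_lbar_if_summable) auto
qed

end

theorem theorem1:
  fixes M :: "'w measure" and F :: "nat \<Rightarrow> 'w measure"
    and X :: "nat \<Rightarrow> 'w \<Rightarrow> nat \<Rightarrow> real" and N :: nat and \<epsilon> :: real
  assumes "prob_space M"
    and "filtration_on M F"
    and "\<forall>t\<ge>1. \<forall>n<N. (\<lambda>w. X t w n) \<in> borel_measurable (F t)"
    and "\<forall>t\<ge>1. \<forall>w\<in>space M. X t w \<in> prob_simplex N"
    and "\<epsilon> > 0"
    and "\<forall>t. \<forall>n<N. AE w in M. \<epsilon> \<le> mu M F X t w n"
  shows
    "(\<forall>nu lam. is_strategy M F N nu lam \<and> (\<forall>t. \<forall>w\<in>space M. \<forall>n<N. 0 < lam t w n) \<and>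
        (AE w in M. summable (\<lambda>t. \<Sum>n<N. (lam t w n - mu M F X t w n)\<^sup>2))
        \<longrightarrow> survival M F N X nu lam)
   \<and> (\<forall>nu lam. is_strategy M F N nu lam \<and> (\<forall>t. \<forall>w\<in>space M. \<forall>n<N. 0 < lam t w n) \<and>
        (\<exists>c>0. \<forall>t. \<forall>w\<in>space M. c \<le> nu t w) \<and> survival M F N X nu lam
        \<longrightarrow> (AE w in M. summable (\<lambda>t. \<Sum>n<N. (lam t w n - mu M F X t w n)\<^sup>2)))
   \<and> (\<forall>Ma m nus lams W0. m < Ma \<and> admissible_profile M F N Ma nus lams \<and>
        (\<forall>k<Ma. 0 < W0 k) \<and> (\<Sum>k<Ma. W0 k) = 1 \<and>
        survival M F N X (nus m) (lams m) \<and>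
        (\<exists>c>0. \<forall>t. \<forall>w\<in>space M. c \<le> nus m t w \<and> (\<forall>n<N. c \<le> lams m t w n))
        \<longrightarrow> (AE w in M. summable (\<lambda>t. \<Sum>n<N.
               (lam_bar N Ma X nus lams W0 t w n - mu M F X t w n)\<^sup>2)))"
proof -
  interpret market M F X N \<epsilon>
    using assms by (intro market.intro filtered_prob_space.intro filtered_prob_space_axioms.intro
        market_axioms.intro)
  show ?thesis
  proof (intro conjI allI impI; elim conjE exE)
    show "survival M F N X nu lam"
      if "\<forall>t. \<forall>w\<in>space M. \<forall>n<N. 0 < lam t w n"
        and "AE w in M. summable (\<lambda>t. \<Sum>n<N. (lam t w n - mu M F X t w n)\<^sup>2)" for nu lam
      using that by (rule survival_if_summable)
    show "AE w in M. summable (\<lambda>t. \<Sum>n<N. (lam t w n - mu M F X t w n)\<^sup>2)"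
      if "is_strategy M F N nu lam" "0 < c" "\<forall>t. \<forall>w\<in>space M. c \<le> nu t w"
        and "survival M F N X nu lam" for nu lam c
      using that by (rule summable_if_survival)
    show "AE w in M. summable (\<lambda>t. \<Sum>n<N. (lam_bar N Ma X nus lams W0 t w n - mu M F X t w n)\<^sup>2)"
      if "m < Ma" "admissible_profile M F N Ma nus lams" "\<forall>k<Ma. 0 < W0 k" "(\<Sum>k<Ma. W0 k) = 1"
        and "survival M F N X (nus m) (lams m)" "0 < c"
        and "\<forall>t. \<forall>w\<in>space M. c \<le> nus m t w \<and> (\<forall>n<N. c \<le> lams m t w n)" for Ma m nus lams W0 c
      using that by (rule summable_lam_bar_if_survival)
  qed
qed

end
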